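(* Let $k$ be a field containing a primitive fourth root of unity $i$, let $H_\pm(8)$ be the quasi-Hopf algebra described in the context, and put $\omega=\frac12(1\pm i)$, $\overline\omega=\frac12(1\mp i)$. Then the space of right cointegrals on $H_\pm(8)$ is $k(\omega P_{x^3}+\overline\omega P_{gx^3})$, the modular element of $H_\pm(8)$ is $\underline g=\omega1+\overline\omega g$, and $\underline g^{-1}=\overline\omega 1+\omega g$.
   Context: $H_{\pm}(8)$ is the unital algebra generated by $g,x$ with relations $g^2=1$, $x^4=0$, $gx=-xg$ (basis $g^ax^b$, $0\le a\le1$, $0\le b\le3$, with dual basis $P_{g^ax^b}$), with $\Delta(g)=g\otimes g$, $\varepsilon(g)=1$, $\Delta(x)=x\otimes(p_+\pm ip_-)+1\otimes p_+x+g\otimes p_-x$, $\varepsilon(x)=0$, where $p_\pm=\frac12(1\pm g)$; reassociator $\Phi=1\otimes1\otimes1-2p_-\otimes p_-\otimes p_-$, antipode $S(g)=g$, $S(x)=-x(p_+\pm ip_-)$, and $\alpha=g$, $\beta=1$. Its modular element $\mu$ satisfies $\mu(g)=-1$, $\mu(x)=0$. General definitions, for a finite dimensional quasi-Hopf algebra $(H,\Delta,\varepsilon,\Phi,S,\alpha,\beta)$ (axioms of Drinfeld: $(\mathrm{Id}\otimes\Delta)\Delta(h)=\Phi(\Delta\otimes\mathrm{Id})\Delta(h)\Phi^{-1}$, counit axioms, 3-cocycle condition for $\Phi$, $(\mathrm{Id}\otimes\varepsilon\otimes\mathrm{Id})(\Phi)=1\otimes1$, $S(h_1)\alpha h_2=\varepsilon(h)\alpha$,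 $h_1\beta S(h_2)=\varepsilon(h)\beta$, $X^1\beta S(X^2)\alpha X^3=1=S(x^1)\alpha x^2\beta S(x^3)$), with $\Delta(h)=h_1\otimes h_2$, $\Phi=X^1\otimes X^2\otimes X^3$, $\Phi^{-1}=x^1\otimes x^2\otimes x^3$: $\gamma=S(x^1X^2)\alpha x^2X^3_1\otimes S(X^1)\alpha x^3X^3_2$; $\delta=X^1_1x^1\beta S(X^3)\otimes X^1_2x^2\beta S(X^2x^3)$; $f=f^1\otimes f^2=(S\otimes S)(\Delta^{\rm op}(x^1))\gamma\Delta(x^2\beta S(x^3))$ with inverse $f^{-1}=g^1\otimes g^2=\Delta(S(x^1)\alpha x^2)\delta(S\otimes S)(\Delta^{\rm cop}(x^3))$; $p_R=p^1\otimes p^2=x^1\otimes x^2\beta S(x^3)$; $q_R=q^1\otimes q^2=X^1\otimes S^{-1}(\alpha X^3)X^2$; $p_L=\tilde p^1\otimes\tilde p^2=X^2S^{-1}(X^1\beta)\otimes X^3$; $q_L=\tilde q^1\otimes\tilde q^2=S(x^1)\alpha x^2\otimes x^3$; $U=g^1S(q^2)\otimes g^2S(q^1)$, $V=S^{-1}(f^2p^2)\otimes S^{-1}(f^1p^1)$. Left integrals: $ht=\varepsilon(h)t$ for all $h$. $\mu\in H^*$ is the algebra map with $th=\mu(h)t$ for left integrals $t$. A left cointegral is $\lambda\in H^*$ with $\lambda(V^2h_2U^2)V^1h_1U^1=\mu(x^1)\lambda(hS(x^2))x^3$ for all $h$; a right cointegral is $\Lambda\in H^*$ with $\Lambda(S(\tilde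 p^2)f^1h_1S^{-1}(\tilde q^2g^2))S(\tilde p^1)f^2h_2S^{-1}(\tilde q^1g^1)=\mu(X^3)\Lambda(hS^{-1}(X^2))X^1$ for all $h$. The modular element of $H$: for a non-zero left integral $t$ and the unique left cointegral $\lambda$ with $\lambda(S^{-1}(t))=1$, $\underline g=\lambda(S^{-1}(q^2t_2p^2))S^{-1}(q^1t_1p^1)$. *)

theory Defs
  imports Main
begin

text \<open>Concrete model of the 8-dimensional quasi-Hopf algebra H(8), with parameter
  j standing for the root of unity written "plus-or-minus i" in the paper.
  The basis element g^a x^b is indexed by the pair (a,b) in Bs.  A linear functional
  on H is given by its values on the basis, i.e. by its coordinates in the
  dual basis P_{g^a x^b}.\<close>

type_synonym idx = "nat \<times> nat"
type_synonym 'k H1 = "idx \<Rightarrow> 'k"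
type_synonym 'k H2 = "idx \<times> idx \<Rightarrow> 'k"
type_synonym 'k H3 = "idx \<times> idx \<times> idx \<Rightarrow> 'k"

definition Bs :: "idx set" where "Bs = {0..1} \<times> {0..3}"

definition Hsp :: "('k::zero) H1 set" where
  "Hsp = {u. \<forall>r. r \<notin> Bs \<longrightarrow> u r = 0}"

definition H3sp :: "('k::zero) H3 set" where
  "H3sp = {w. \<forall>r. r \<notin> Bs \<times> Bs \<times> Bs \<longrightarrow> w r = 0}"

definition eb :: "idx \<Rightarrow> ('k::field) H1" where
  "eb p = (\<lambda>q. if q = p then 1 else 0)"

definition hadd :: "('a \<Rightarrow> 'k::field) \<Rightarrow> ('a \<Rightarrow> 'k) \<Rightarrow> 'a \<Rightarrow> 'k" where
  "hadd u v = (\<lambda>r. u r + v r)"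

definition hsmul :: "'k::field \<Rightarrow> ('a \<Rightarrow> 'k) \<Rightarrow> 'a \<Rightarrow> 'k" where
  "hsmul c u = (\<lambda>r. c * u r)"

text \<open>Product of basis elements: g^a x^b g^c x^d = (-1)^(bc) g^(a+c) x^(b+d), x^4 = 0.\<close>
definition bm :: "idx \<Rightarrow> idx \<Rightarrow> ('k::field) H1" where
  "bm p q = (if snd p + snd q < 4
     then hsmul ((-1) ^ (snd p * fst q)) (eb ((fst p + fst q) mod 2, snd p + snd q))
     else (\<lambda>_. 0))"

definition hmul :: "('k::field) H1 \<Rightarrow> 'k H1 \<Rightarrow> 'k H1" where
  "hmul u v = (\<lambda>r. \<Sum>p\<in>Bs. \<Sum>q\<in>Bs. u p * v q * bm p q r)"

definition hmul2 :: "('k::field) H2 \<Rightarrow> 'k H2 \<Rightarrow> 'k H2" where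
  "hmul2 w z = (\<lambda>(r1, r2). \<Sum>(p1, p2)\<in>Bs \<times> Bs. \<Sum>(q1, q2)\<in>Bs \<times> Bs.
      w (p1, p2) * z (q1, q2) * bm p1 q1 r1 * bm p2 q2 r2)"

definition hmul3 :: "('k::field) H3 \<Rightarrow> 'k H3 \<Rightarrow> 'k H3" where
  "hmul3 w z = (\<lambda>(r1, r2, r3). \<Sum>(p1, p2, p3)\<in>Bs \<times> Bs \<times> Bs. \<Sum>(q1, q2, q3)\<in>Bs \<times> Bs \<times> Bs.
      w (p1, p2, p3) * z (q1, q2, q3) * bm p1 q1 r1 * bm p2 q2 r2 * bm p3 q3 r3)"

definition tens2 :: "('k::field) H1 \<Rightarrow> 'k H1 \<Rightarrow> 'k H2" where
  "tens2 u v = (\<lambda>(p, q). u p * v q)"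

definition tens3 :: "('k::field) H1 \<Rightarrow> 'k H1 \<Rightarrow> 'k H1 \<Rightarrow> 'k H3" where
  "tens3 u v w = (\<lambda>(p, q, r). u p * v q * w r)"

definition flip2 :: "('k::field) H2 \<Rightarrow> 'k H2" where
  "flip2 w = (\<lambda>(p, q). w (q, p))"

definition one1 :: "('k::field) H1" where "one1 = eb (0, 0)"
definition gel :: "('k::field) H1" where "gel = eb (1, 0)"
definition xel :: "('k::field) H1" where "xel = eb (0, 1)"
definition one2 :: "('k::field) H2" where "one2 = tens2 one1 one1"
definition one3 :: "('k::field) H3" where "one3 = tens3 one1 one1 one1"

definition pplus :: "('k::field) H1" where "pplus = hsmul (1/2) (hadd one1 gel)"
definition pminus :: "('k::field) H1" where "pminus = hsmul (1/2) (hadd one1 (hsmul (-1) gel))"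

definition linext :: "(idx \<Rightarrow> 'a \<Rightarrow> 'k::field) \<Rightarrow> 'k H1 \<Rightarrow> 'a \<Rightarrow> 'k" where
  "linext f u = (\<lambda>r. \<Sum>p\<in>Bs. u p * f p r)"

text \<open>Comultiplication: algebra map with Delta(g) = g@g and the given Delta(x).\<close>
definition Dg :: "('k::field) H2" where "Dg = tens2 gel gel"
definition Dx :: "'k::field \<Rightarrow> 'k H2" where
  "Dx j = hadd (hadd (tens2 xel (hadd pplus (hsmul j pminus)))
                     (tens2 one1 (hmul pplus xel)))
               (tens2 gel (hmul pminus xel))"
definition Dbasis :: "'k::field \<Rightarrow> idx \<Rightarrow> 'k H2" where
  "Dbasis j p = hmul2 ((hmul2 Dg ^^ fst p) one2) ((hmul2 (Dx j) ^^ snd p) one2)"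
definition Delta :: "'k::field \<Rightarrow> 'k H1 \<Rightarrow> 'k H2" where
  "Delta j = linext (Dbasis j)"

text \<open>Antipode: anti-algebra map with S(g) = g, S(x) = -x(p_+ + j p_-).\<close>
definition Sx :: "'k::field \<Rightarrow> 'k H1" where
  "Sx j = hsmul (-1) (hmul xel (hadd pplus (hsmul j pminus)))"
definition Sbasis :: "'k::field \<Rightarrow> idx \<Rightarrow> 'k H1" where
  "Sbasis j p = hmul ((hmul (Sx j) ^^ snd p) one1) ((hmul gel ^^ fst p) one1)"
definition Santi :: "'k::field \<Rightarrow> 'k H1 \<Rightarrow> 'k H1" where
  "Santi j = linext (Sbasis j)"
definition Sinv :: "'k::field \<Rightarrow> 'k H1 \<Rightarrow> 'k H1" where
  "Sinv j h = (THE y. y \<in> Hsp \<and> Santi j y = h)"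

definition SS2 :: "'k::field \<Rightarrow> 'k H2 \<Rightarrow> 'k H2" where
  "SS2 j w = (\<lambda>(r1, r2). \<Sum>(p, q)\<in>Bs \<times> Bs. w (p, q) * Santi j (eb p) r1 * Santi j (eb q) r2)"
definition SinvSinv2 :: "'k::field \<Rightarrow> 'k H2 \<Rightarrow> 'k H2" where
  "SinvSinv2 j w = (\<lambda>(r1, r2). \<Sum>(p, q)\<in>Bs \<times> Bs. w (p, q) * Sinv j (eb p) r1 * Sinv j (eb q) r2)"

definition eps :: "('k::field) H1 \<Rightarrow> 'k" where
  "eps u = (\<Sum>p\<in>Bs. u p * (if snd p = 0 then 1 else 0))"
definition muv :: "('k::field) H1 \<Rightarrow> 'k" where
  "muv u = (\<Sum>p\<in>Bs. u p * (if snd p = 0 then (-1) ^ fst p else 0))"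
definition fev :: "('k::field) H1 \<Rightarrow> 'k H1 \<Rightarrow> 'k" where
  "fev l u = (\<Sum>p\<in>Bs. l p * u p)"
definition id_tens_fun :: "('k::field) H1 \<Rightarrow> 'k H2 \<Rightarrow> 'k H1" where
  "id_tens_fun l w = (\<lambda>r. \<Sum>b\<in>Bs. w (r, b) * l b)"
definition fun_tens_id :: "('k::field) H1 \<Rightarrow> 'k H2 \<Rightarrow> 'k H1" where
  "fun_tens_id l w = (\<lambda>r. \<Sum>a\<in>Bs. l a * w (a, r))"

definition Phi :: "('k::field) H3" where
  "Phi = hadd one3 (hsmul (-2) (tens3 pminus pminus pminus))"
definition Phiinv :: "('k::field) H3" where
  "Phiinv = (THE y. y \<in> H3sp \<and> hmul3 Phi y = one3 \<and> hmul3 y Phi = one3)"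
definition alpha :: "('k::field) H1" where "alpha = gel"
definition beta :: "('k::field) H1" where "beta = one1"

definition B3 :: "(idx \<times> idx \<times> idx) set" where "B3 = Bs \<times> Bs \<times> Bs"

definition gammaE :: "'k::field \<Rightarrow> 'k H2" where
  "gammaE j = (\<lambda>r. \<Sum>(p1, p2, p3)\<in>B3. \<Sum>(q1, q2, q3)\<in>B3.
     Phi (p1, p2, p3) * Phiinv (q1, q2, q3) *
     hmul2 (tens2 (hmul (hmul (Santi j (hmul (eb q1) (eb p2))) alpha) (eb q2))
                  (hmul (hmul (Santi j (eb p1)) alpha) (eb q3)))
           (Delta j (eb p3)) r)"

definition deltaE :: "'k::field \<Rightarrow> 'k H2" where
  "deltaE j = (\<lambda>r. \<Sum>(p1, p2, p3)\<in>B3. \<Sum>(q1, q2, q3)\<in>B3.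
     Phi (p1, p2, p3) * Phiinv (q1, q2, q3) *
     hmul2 (Delta j (eb p1))
           (tens2 (hmul (hmul (eb q1) beta) (Santi j (eb p3)))
                  (hmul (hmul (eb q2) beta) (Santi j (hmul (eb p2) (eb q3))))) r)"

definition fE :: "'k::field \<Rightarrow> 'k H2" where
  "fE j = (\<lambda>r. \<Sum>(q1, q2, q3)\<in>B3. Phiinv (q1, q2, q3) *
     hmul2 (hmul2 (SS2 j (flip2 (Delta j (eb q1)))) (gammaE j))
           (Delta j (hmul (hmul (eb q2) beta) (Santi j (eb q3)))) r)"

definition finvE :: "'k::field \<Rightarrow> 'k H2" where
  "finvE j = (\<lambda>r. \<Sum>(q1, q2, q3)\<in>B3. Phiinv (q1, q2, q3) *
     hmul2 (hmul2 (Delta j (hmul (hmul (Santi j (eb q1)) alpha) (eb q2))) (deltaE j))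
           (SS2 j (flip2 (Delta j (eb q3)))) r)"

definition pR :: "'k::field \<Rightarrow> 'k H2" where
  "pR j = (\<lambda>r. \<Sum>(q1, q2, q3)\<in>B3. Phiinv (q1, q2, q3) *
     tens2 (eb q1) (hmul (hmul (eb q2) beta) (Santi j (eb q3))) r)"
definition qR :: "'k::field \<Rightarrow> 'k H2" where
  "qR j = (\<lambda>r. \<Sum>(p1, p2, p3)\<in>B3. Phi (p1, p2, p3) *
     tens2 (eb p1) (hmul (Sinv j (hmul alpha (eb p3))) (eb p2)) r)"
definition pL :: "'k::field \<Rightarrow> 'k H2" where
  "pL j = (\<lambda>r. \<Sum>(p1, p2, p3)\<in>B3. Phi (p1, p2, p3) *
     tens2 (hmul (eb p2) (Sinv j (hmul (eb p1) beta))) (eb p3) r)"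
definition qL :: "'k::field \<Rightarrow> 'k H2" where
  "qL j = (\<lambda>r. \<Sum>(q1, q2, q3)\<in>B3. Phiinv (q1, q2, q3) *
     tens2 (hmul (hmul (Santi j (eb q1)) alpha) (eb q2)) (eb q3) r)"

text \<open>U = g^1 S(q^2) @ g^2 S(q^1);  V = S^-1(f^2 p^2) @ S^-1(f^1 p^1).\<close>
definition UU :: "'k::field \<Rightarrow> 'k H2" where
  "UU j = hmul2 (finvE j) (SS2 j (flip2 (qR j)))"
definition VV :: "'k::field \<Rightarrow> 'k H2" where
  "VV j = SinvSinv2 j (flip2 (hmul2 (fE j) (pR j)))"

definition is_left_int :: "('k::field) H1 \<Rightarrow> bool" where
  "is_left_int t \<longleftrightarrow> t \<in> Hsp \<and> (\<forall>h\<in>Hsp. hmul h t = hsmul (eps h) t)"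

text \<open>lambda(V^2 h_2 U^2) V^1 h_1 U^1 = mu(x^1) lambda(h S(x^2)) x^3.\<close>
definition is_left_coint :: "'k::field \<Rightarrow> 'k H1 \<Rightarrow> bool" where
  "is_left_coint j l \<longleftrightarrow> (\<forall>h\<in>Hsp.
     id_tens_fun l (hmul2 (hmul2 (VV j) (Delta j h)) (UU j)) =
     (\<lambda>r. \<Sum>(p1, p2, p3)\<in>B3. Phiinv (p1, p2, p3) * muv (eb p1) *
            fev l (hmul h (Santi j (eb p2))) * eb p3 r))"

text \<open>Lambda(S(p~^2) f^1 h_1 S^-1(q~^2 g^2)) S(p~^1) f^2 h_2 S^-1(q~^1 g^1)
  = mu(X^3) Lambda(h S^-1(X^2)) X^1.\<close>
definition is_right_coint :: "'k::field \<Rightarrow> 'k H1 \<Rightarrow> bool" where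
  "is_right_coint j L \<longleftrightarrow> (\<forall>h\<in>Hsp.
     fun_tens_id L (hmul2 (hmul2 (hmul2 (SS2 j (flip2 (pL j))) (fE j)) (Delta j h))
                          (SinvSinv2 j (flip2 (hmul2 (qL j) (finvE j))))) =
     (\<lambda>r. \<Sum>(p1, p2, p3)\<in>B3. Phi (p1, p2, p3) * muv (eb p3) *
            fev L (hmul h (Sinv j (eb p2))) * eb p1 r))"

text \<open>lambda(S^-1(q^2 t_2 p^2)) S^-1(q^1 t_1 p^1).\<close>
definition modg :: "'k::field \<Rightarrow> 'k H1 \<Rightarrow> 'k H1 \<Rightarrow> 'k H1" where
  "modg j t l = (\<lambda>r. \<Sum>(a, b)\<in>Bs \<times> Bs.
     hmul2 (hmul2 (qR j) (Delta j t)) (pR j) (a, b) * fev l (Sinv j (eb b)) * Sinv j (eb a) r)"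

end

theory Submission
  imports Defs
begin

text \<open>Proof outline.  H(8) is finite dimensional, so every statement of the theorem is a
  finite linear-algebra problem over the subring of k generated by 1/2 and j = s i (j^2 = -1).

  (1) Elements of H, H tensor H and H tensor H tensor H are encoded as sparse vectors with
      exact coefficients (a + b j)/2^n, and every operation of the model (products, tensor
      products, flip, S, S^-1, Delta, counit, mu, pairings) is shown to commute with this encoding.
      The simplifier can then evaluate any closed expression to an explicit normal form.
  (2) S, S^-1 and Delta are tabulated on the basis, Phi is an involution (so Phi^-1 = Phi), and
      gamma, delta, f, f^-1, p_R, q_R, p_L, q_L, U, V are computed explicitly.
  (3) The cointegral and integral conditions are linear in h, hence reduce to the eight basis
      elements; their defects are linear forms in the unknown functional, which are computed.
      Solving these small linear systems gives the right cointegrals (a line spanned by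
      omega P_{x^3} + omega-bar P_{gx^3}), the left cointegrals (multiples of P_{x^3} on the
      basis) and the left integrals (multiples of (1 + g) x^3).
  (4) For the normalised pair ((1 + g) x^3, P_{x^3}) the modular element is evaluated to
      omega 1 + omega-bar g; every other normalised pair is a rescaling with the same result.\<close>

section \<open>Exact arithmetic in the subring generated by 1/2 and j\<close>

text \<open>All structure constants of H(8) lie in Z[1/2, j] where j is the chosen square root of -1.
  An element (a + b j) / 2^n is represented by the triple (a, b, n).\<close>

type_synonym dnum = "int \<times> int \<times> nat"

fun dadd :: "dnum \<Rightarrow> dnum \<Rightarrow> dnum" where
  "dadd (a,b,n) (c,d,m) = (if n \<le> m then (a*2^(m-n)+c, b*2^(m-n)+d, m)
                            else (a + c*2^(n-m), b + d*2^(n-m), n))"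

fun dmul :: "dnum \<Rightarrow> dnum \<Rightarrow> dnum" where
  "dmul (a,b,n) (c,d,m) = (a*c - b*d, a*d+b*c, n+m)"

text \<open>Cancelling common factors 2 keeps the numerals small during long computations.\<close>
function dnorm :: "dnum \<Rightarrow> dnum" where
  "dnorm (a,b,n) = (if 0 < n \<and> even a \<and> even b then dnorm (a div 2, b div 2, n - 1) else (a,b,n))"
  by pat_completeness auto
termination by (relation "measure (\<lambda>(a,b,n). n)") auto
declare dnorm.simps[simp del]

fun dzero :: "dnum \<Rightarrow> bool" where
  "dzero (a,b,n) = (a = 0 \<and> b = 0)"

section \<open>Sparse vectors\<close>

text \<open>A sparse vector over an index type 'i is a list of index/coefficient pairs; it denotes the
  sum of the corresponding multiples of unit vectors.\<close>

type_synonym 'i svec = "('i \<times> dnum) list"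

fun sv_ins :: "'i \<times> dnum \<Rightarrow> 'i svec \<Rightarrow> 'i svec" where
  "sv_ins (k,c) [] = (if dzero c then [] else [(k, dnorm c)])"
| "sv_ins (k,c) ((l,d)#xs) = (if k = l then (if dzero (dadd c d) then xs else (l, dnorm (dadd c d))#xs)
                           else (l,d) # sv_ins (k,c) xs)"

definition sv_add :: "'i svec \<Rightarrow> 'i svec \<Rightarrow> 'i svec" where
  "sv_add A B = foldr sv_ins A B"

definition sv_scale :: "dnum \<Rightarrow> 'i svec \<Rightarrow> 'i svec" where
  "sv_scale c A = (if dzero c then [] else map (\<lambda>(k,d). (k, dnorm (dmul c d))) A)"

definition sv_lin :: "('i \<Rightarrow> 'j svec) \<Rightarrow> 'i svec \<Rightarrow> 'j svec" where
  "sv_lin f xs = foldr (\<lambda>(k,c) acc. sv_add (sv_scale c (f k)) acc) xs []"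

definition sv_bilin :: "('i \<Rightarrow> 'j \<Rightarrow> 'l svec) \<Rightarrow> 'i svec \<Rightarrow> 'j svec \<Rightarrow> 'l svec" where
  "sv_bilin f xs ys = sv_lin (\<lambda>k. sv_lin (f k) ys) xs"

definition sv_tens :: "'i svec \<Rightarrow> 'j svec \<Rightarrow> ('i \<times> 'j) svec" where
  "sv_tens A B = concat (map (\<lambda>(k,c). map (\<lambda>(l,d). ((k,l), dmul c d)) B) A)"

definition sv_flip :: "('i \<times> 'j) svec \<Rightarrow> ('j \<times> 'i) svec" where
  "sv_flip A = map (\<lambda>((p,q),c). ((q,p),c)) A"

fun sv_in :: "'i set \<Rightarrow> 'i svec \<Rightarrow> bool" where
  "sv_in I [] = True"
| "sv_in I (x#xs) = (fst x \<in> I \<and> sv_in I xs)"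

definition unitv :: "'i \<Rightarrow> 'i \<Rightarrow> 'k::field" where
  "unitv k = (\<lambda>q. if q = k then 1 else 0)"

lemma sum_unitv: "finite A \<Longrightarrow> (\<Sum>x\<in>A. (if x = p then (1::'k::field) else 0) * F x) = (if p \<in> A then F p else 0)"
proof -
  have e: "(if x = p then (1::'k) else 0) * F x = (if x = p then F p else 0)" for x by simp
  assume "finite A" then show ?thesis by (simp only: e sum.delta)
qed

locale imag_unit =
  fixes j :: "'k::field"
  assumes j_sq: "j * j = -1" and two_nz: "(2::'k) \<noteq> 0"
begin

definition dval :: "dnum \<Rightarrow> 'k" where
  "dval c = (case c of (a,b,n) \<Rightarrow> (of_int a + of_int b * j) / 2^n)"

lemma dval_add: "dval (dadd x y) = dval x + dval y"
proof -
  obtain a b n c d m where x: "x = (a,b,n)" and y: "y = (c,d,m)" by (cases x, cases y) auto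
  have t: "(2::'k)^k \<noteq> 0" for k using two_nz by simp
  have split: "(A*Q + C)/(Q*P) = A/P + C/(Q*P)" if "(P::'k) \<noteq> 0" "Q \<noteq> 0" for A C P Q
    using that by (simp add: field_simps)
  show ?thesis
  proof (cases "n \<le> m")
    case True
    then have m: "(2::'k)^m = 2^(m-n) * 2^n" by (simp add: power_add[symmetric])
    have num: "of_int (a*2^(m-n)+c) + of_int (b*2^(m-n)+d)*j
       = (of_int a + of_int b*j) * (2::'k)^(m-n) + (of_int c + of_int d*j)"
      by (simp add: algebra_simps)
    show ?thesis using True unfolding x y dval_def
      by (simp only: dadd.simps if_True prod.case num m split[OF t t])
  next
    case False
    then have m: "(2::'k)^n = 2^(n-m) * 2^m" by (simp add: power_add[symmetric])
    have num: "of_int (a + c*2^(n-m)) + of_int (b + d*2^(n-m))*j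
       = (of_int c + of_int d*j) * (2::'k)^(n-m) + (of_int a + of_int b*j)"
      by (simp add: algebra_simps)
    show ?thesis using False unfolding x y dval_def
      by (simp only: dadd.simps if_False prod.case num m split[OF t t]) (rule add.commute)
  qed
qed

lemma dval_mul: "dval (dmul x y) = dval x * dval y"
proof -
  obtain a b n c d m where x: "x = (a,b,n)" and y: "y = (c,d,m)" by (cases x, cases y) auto
  have num: "of_int (a*c - b*d) + of_int (a*d+b*c) * j
       = (of_int a + of_int b * j) * (of_int c + of_int d * (j::'k))"
    using j_sq by (simp add: of_int_mult of_int_add of_int_diff) algebra
  show ?thesis unfolding x y dval_def
    by (simp only: dmul.simps prod.case num power_add times_divide_times_eq)
qed

lemma dval_norm: "dval (dnorm x) = dval x"
proof (induction x rule: dnorm.induct)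
  case (1 a b n)
  show ?case
  proof (cases "0 < n \<and> even a \<and> even b")
    case True
    then obtain a' b' n' where a: "a = 2*a'" and b: "b = 2*b'" and n: "n = Suc n'"
      by (metis evenE gr0_implies_Suc)
    have "dnorm (a,b,n) = dnorm (a div 2, b div 2, n - 1)"
      using True by (subst dnorm.simps) simp
    then have "dval (dnorm (a,b,n)) = dval (a div 2, b div 2, n - 1)"
      using 1 True by simp
    also have "\<dots> = dval (a,b,n)" unfolding dval_def a b n using two_nz
      by (simp add: field_simps)
    finally show ?thesis .
  next
    case False
    then have "dnorm (a,b,n) = (a,b,n)" by (subst dnorm.simps) (simp only: if_False)
    then show ?thesis by simp
  qed
qed

lemma dval_zero: "dzero x \<Longrightarrow> dval x = 0"
  by (cases x) (auto simp: dval_def)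

lemma dzero_add: "dzero (dadd c d) \<Longrightarrow> dval c + dval d = 0"
  using dval_zero[of "dadd c d"] by (simp only: dval_add)

definition vec :: "'i svec \<Rightarrow> 'i \<Rightarrow> 'k" where
  "vec xs = (\<lambda>r. sum_list (map (\<lambda>(k,c). if r = k then dval c else 0) xs))"

lemma vec_Nil: "vec [] r = 0"
  by (simp add: vec_def)

lemma vec_Nil_fun: "vec [] = (\<lambda>_. 0)"
  by (simp add: vec_def)

lemma vec_Cons: "vec ((k,c)#xs) r = (if r = k then dval c else 0) + vec xs r"
  by (simp add: vec_def)

lemma vec_Cons_fun: "vec ((k,c)#xs) = hadd (hsmul (dval c) (unitv k)) (vec xs)"
  by (auto simp: vec_Cons hsmul_def unitv_def hadd_def)

lemma vec_ins: "vec (sv_ins x xs) r = vec [x] r + vec xs r"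
proof (induction x xs rule: sv_ins.induct)
  case (1 k c) then show ?case by (auto simp: vec_Cons vec_Nil dval_norm dval_zero)
next
  case (2 k c l d xs)
  show ?case
  proof (cases "k = l")
    case True
    then show ?thesis using dzero_add[of c d]
      by (simp add: vec_Cons vec_Nil dval_norm dval_add del: dadd.simps dzero.simps)
  next
    case False
    then show ?thesis using 2 by (simp add: vec_Cons vec_Nil)
  qed
qed

lemma vec_add: "vec (sv_add A B) r = vec A r + vec B r"
  unfolding sv_add_def by (induction A) (auto simp: vec_ins vec_Cons vec_Nil)

lemma vec_scale: "vec (sv_scale c A) r = dval c * vec A r"
  unfolding sv_scale_def
  by (induction A) (auto simp: vec_Cons vec_Nil dval_norm dval_mul dval_zero distrib_left)

lemma vec_append: "vec (A @ B) r = vec A r + vec B r"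
  by (induction A) (auto simp: vec_Cons vec_Nil)

lemma vec_tens: "vec (sv_tens A B) (k,l) = vec A k * vec B l"
  unfolding sv_tens_def
proof (induction A)
  case Nil then show ?case by (simp add: vec_Nil)
next
  case (Cons x A)
  obtain k' c where x: "x = (k',c)" by (cases x)
  have "vec (map (\<lambda>(l', d). ((k', l'), dmul c d)) B) (k,l) = (if k = k' then dval c else 0) * vec B l"
    by (induction B) (auto simp: vec_Cons vec_Nil dval_mul distrib_left)
  then show ?case using Cons by (simp add: x vec_append vec_Cons distrib_right)
qed

lemma vec_flip: "vec (sv_flip A) (p,q) = vec A (q,p)"
  unfolding sv_flip_def by (induction A) (auto simp: vec_Cons vec_Nil)

lemma vec_outside: "sv_in I A \<Longrightarrow> r \<notin> I \<Longrightarrow> vec A r = 0"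
  by (induction A) (auto simp: vec_Cons vec_Nil)

text \<open>Two sparse vectors denote the same vector if their difference normalises to the empty list;
  this is how all identities between concrete elements are verified.\<close>
lemma vec_eqI: "X = vec A \<Longrightarrow> Y = vec B \<Longrightarrow> sv_add A (sv_scale (-1,0,0) B) = [] \<Longrightarrow> X = Y"
proof -
  assume X: "X = vec A" and Y: "Y = vec B" and e: "sv_add A (sv_scale (-1,0,0) B) = []"
  have "vec A r = vec B r" for r
  proof -
    have "0 = vec (sv_add A (sv_scale (-1,0,0) B)) r" by (simp add: e vec_Nil)
    also have "\<dots> = vec A r - vec B r" by (simp add: vec_add vec_scale dval_def)
    finally show ?thesis by simp
  qed
  then show ?thesis using X Y by auto
qed

lemma linear_vec:
  fixes op :: "('i \<Rightarrow> 'k) \<Rightarrow> ('j \<Rightarrow> 'k)"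
  assumes add: "\<And>u v. op (hadd u v) = hadd (op u) (op v)"
    and sm: "\<And>c u. op (hsmul c u) = hsmul c (op u)"
    and z: "op (\<lambda>_. 0) = (\<lambda>_. 0)"
    and bas: "\<And>k. k \<in> I \<Longrightarrow> op (unitv k) = vec (f k)"
    and ok: "sv_in I xs"
  shows "op (vec xs) = vec (sv_lin f xs)"
  using ok
proof (induction xs)
  case Nil
  then show ?case by (simp add: vec_Nil_fun z sv_lin_def)
next
  case (Cons x xs)
  obtain k c where x: "x = (k,c)" by (cases x)
  have lin: "sv_lin f (x#xs) = sv_add (sv_scale c (f k)) (sv_lin f xs)" by (simp add: sv_lin_def x)
  have "op (vec (x#xs)) = hadd (hsmul (dval c) (vec (f k))) (vec (sv_lin f xs))"
    using Cons by (simp add: x vec_Cons_fun add sm bas)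
  also have "\<dots> = vec (sv_lin f (x#xs))"
    by (rule ext) (simp add: lin vec_add vec_scale hadd_def hsmul_def)
  finally show ?case .
qed

lemma bilinear_vec:
  fixes op :: "('i \<Rightarrow> 'k) \<Rightarrow> ('j \<Rightarrow> 'k) \<Rightarrow> ('l \<Rightarrow> 'k)"
  assumes add1: "\<And>u v w. op (hadd u v) w = hadd (op u w) (op v w)"
    and sm1: "\<And>c u w. op (hsmul c u) w = hsmul c (op u w)"
    and z1: "\<And>w. op (\<lambda>_. 0) w = (\<lambda>_. 0)"
    and add2: "\<And>u v w. op w (hadd u v) = hadd (op w u) (op w v)"
    and sm2: "\<And>c u w. op w (hsmul c u) = hsmul c (op w u)"
    and z2: "\<And>w. op w (\<lambda>_. 0) = (\<lambda>_. 0)"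
    and bas: "\<And>k l. k \<in> I \<Longrightarrow> l \<in> J \<Longrightarrow> op (unitv k) (unitv l) = vec (f k l)"
    and ok1: "sv_in I xs" and ok2: "sv_in J ys"
  shows "op (vec xs) (vec ys) = vec (sv_bilin f xs ys)"
proof -
  have b1: "op (unitv k) (vec ys) = vec (sv_lin (f k) ys)" if "k \<in> I" for k
    by (rule linear_vec[where I=J]) (auto simp: add2 sm2 z2 bas that ok2)
  show ?thesis unfolding sv_bilin_def
    by (rule linear_vec[where op="\<lambda>u. op u (vec ys)" and I=I]) (auto simp: add1 sm1 z1 b1 ok1)
qed

definition sv_pair :: "('i \<Rightarrow> 'k) \<Rightarrow> 'i svec \<Rightarrow> 'k" where
  "sv_pair g xs = foldr (\<lambda>(k,c) acc. dval c * g k + acc) xs 0"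

lemma sv_pair_Nil: "sv_pair g [] = 0"
  by (simp add: sv_pair_def)

lemma sv_pair_Cons: "sv_pair g ((k,c)#xs) = dval c * g k + sv_pair g xs"
  by (simp add: sv_pair_def)

lemma functional_vec:
  fixes phi :: "('i \<Rightarrow> 'k) \<Rightarrow> 'k"
  assumes add: "\<And>u v. phi (hadd u v) = phi u + phi v"
    and sm: "\<And>c u. phi (hsmul c u) = c * phi u"
    and z: "phi (\<lambda>_. 0) = 0"
    and bas: "\<And>k. k \<in> I \<Longrightarrow> phi (unitv k) = g k"
    and ok: "sv_in I xs"
  shows "phi (vec xs) = sv_pair g xs"
  using ok
proof (induction xs)
  case Nil
  then show ?case by (simp add: vec_Nil_fun z sv_pair_def)
next
  case (Cons x xs)
  obtain k c where x: "x = (k,c)" by (cases x)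
  then show ?case using Cons
    by (auto simp: x vec_Cons_fun add sm bas sv_pair_Cons)
qed

lemma sum_vec:
  assumes "sv_in I xs" "finite I"
  shows "(\<Sum>x\<in>I. vec xs x * G x) = sv_pair G xs"
  using assms
proof (induction xs)
  case Nil then show ?case by (simp add: vec_Nil sv_pair_Nil)
next
  case (Cons x xs)
  obtain k c where x: "x = (k,c)" by (cases x)
  have e: "vec (x#xs) y * G y = (if y = k then dval c * G y else 0) + vec xs y * G y" for y
    by (simp add: x vec_Cons distrib_right)
  have "(\<Sum>y\<in>I. vec (x#xs) y * G y) = (\<Sum>y\<in>I. (if y = k then dval c * G y else 0)) + (\<Sum>y\<in>I. vec xs y * G y)"
    unfolding e by (simp add: sum.distrib)
  also have "(\<Sum>y\<in>I. (if y = k then dval c * G y else 0)) = dval c * G k"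
    using Cons.prems by (simp add: x)
  finally show ?case using Cons by (simp add: x sv_pair_Cons)
qed

lemma sv_pair_ins: "sv_pair g (sv_ins x xs) = sv_pair g [x] + sv_pair g xs"
proof (induction x xs rule: sv_ins.induct)
  case (1 k c) then show ?case by (auto simp: sv_pair_Cons sv_pair_Nil dval_norm dval_zero)
next
  case (2 k c l d xs)
  show ?case
  proof (cases "k = l")
    case True
    show ?thesis
    proof (cases "dzero (dadd c d)")
      case z: True
      have "dval c * g l + dval d * g l = 0" using dzero_add[OF z] by (simp add: distrib_right[symmetric])
      then show ?thesis using True z
        by (simp add: sv_pair_Cons sv_pair_Nil del: dadd.simps dzero.simps)
    next
      case False
      then show ?thesis using True
        by (simp add: sv_pair_Cons sv_pair_Nil dval_norm dval_add distrib_right del: dadd.simps dzero.simps)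
    qed
  next
    case False
    then show ?thesis using 2 by (simp add: sv_pair_Cons sv_pair_Nil algebra_simps)
  qed
qed

lemma sv_pair_add: "sv_pair g (sv_add A B) = sv_pair g A + sv_pair g B"
  unfolding sv_add_def by (induction A) (auto simp: sv_pair_ins sv_pair_Cons sv_pair_Nil)

lemma sv_pair_scale: "sv_pair g (sv_scale c A) = dval c * sv_pair g A"
  unfolding sv_scale_def
  by (induction A) (auto simp: sv_pair_Cons sv_pair_Nil dval_norm dval_mul dval_zero algebra_simps)

end

text \<open>The products of H, of H tensor H and of H tensor H tensor H are all of the form
  u v = sum over p, q of u_p v_q c(p,q), for structure constants c on a finite index set.\<close>

definition sc_mul :: "('i \<Rightarrow> 'i \<Rightarrow> 'i \<Rightarrow> 'k::field) \<Rightarrow> 'i set \<Rightarrow> ('i \<Rightarrow> 'k) \<Rightarrow> ('i \<Rightarrow> 'k) \<Rightarrow> 'i \<Rightarrow> 'k" where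
  "sc_mul c A u v = (\<lambda>r. \<Sum>p\<in>A. \<Sum>q\<in>A. u p * v q * c p q r)"

lemma sc_mul_add1: "sc_mul c A (hadd u v) w = hadd (sc_mul c A u w) (sc_mul c A v w)"
  by (rule ext) (simp add: sc_mul_def hadd_def distrib_right sum.distrib)
lemma sc_mul_sm1: "sc_mul c A (hsmul a u) w = hsmul a (sc_mul c A u w)"
  by (rule ext) (simp add: sc_mul_def hsmul_def sum_distrib_left mult.assoc)
lemma sc_mul_z1: "sc_mul c A (\<lambda>_. 0) w = (\<lambda>_. 0)"
  by (rule ext) (simp add: sc_mul_def)
lemma sc_mul_add2: "sc_mul c A w (hadd u v) = hadd (sc_mul c A w u) (sc_mul c A w v)"
  by (rule ext) (simp add: sc_mul_def hadd_def distrib_right distrib_left sum.distrib)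
lemma sc_mul_sm2: "sc_mul c A w (hsmul a u) = hsmul a (sc_mul c A w u)"
  by (rule ext) (simp add: sc_mul_def hsmul_def sum_distrib_left mult.assoc mult.left_commute)
lemma sc_mul_z2: "sc_mul c A w (\<lambda>_. 0) = (\<lambda>_. 0)"
  by (rule ext) (simp add: sc_mul_def)

lemma sc_mul_unitv:
  assumes "finite A" "p \<in> A" "q \<in> A"
  shows "sc_mul c A (unitv p) (unitv q) = c p q"
proof (rule ext)
  fix r
  have "sc_mul c A (unitv p) (unitv q) r
      = (\<Sum>p'\<in>A. (if p' = p then 1 else 0) * (\<Sum>q'\<in>A. (if q' = q then 1 else 0) * c p' q' r))"
    by (simp add: sc_mul_def unitv_def sum_distrib_left mult.assoc)
  also have "\<dots> = c p q r" using assms by (simp add: sum_unitv)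
  finally show "sc_mul c A (unitv p) (unitv q) r = c p q r" .
qed

lemma sc_mul_unit_left:
  assumes "finite A" "e \<in> A" and unit: "\<And>q r. q \<in> A \<Longrightarrow> c e q r = (if r = q then 1 else 0)"
    and z: "\<And>r. r \<notin> A \<Longrightarrow> z r = 0"
  shows "sc_mul c A (unitv e) z = z"
proof (rule ext)
  fix r
  have "sc_mul c A (unitv e) z r = (\<Sum>p\<in>A. (if p = e then 1 else 0) * (\<Sum>q\<in>A. z q * c p q r))"
    by (simp add: sc_mul_def unitv_def sum_distrib_left mult.assoc)
  also have "\<dots> = (\<Sum>q\<in>A. z q * c e q r)" using assms(1,2) by (simp add: sum_unitv)
  also have "\<dots> = (\<Sum>q\<in>A. (if q = r then 1 else 0) * z q)"
    by (intro sum.cong refl) (simp add: unit)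
  also have "\<dots> = z r" using assms(1) z by (cases "r \<in> A") (simp_all add: sum_unitv)
  finally show "sc_mul c A (unitv e) z r = z r" .
qed

lemma sc_mul_unit_right:
  assumes "finite A" "e \<in> A" and unit: "\<And>q r. q \<in> A \<Longrightarrow> c q e r = (if r = q then 1 else 0)"
    and z: "\<And>r. r \<notin> A \<Longrightarrow> z r = 0"
  shows "sc_mul c A z (unitv e) = z"
proof (rule ext)
  fix r
  have "sc_mul c A z (unitv e) r = (\<Sum>p\<in>A. z p * (\<Sum>q\<in>A. (if q = e then 1 else 0) * c p q r))"
    by (simp add: sc_mul_def unitv_def sum_distrib_left mult_ac)
  also have "\<dots> = (\<Sum>p\<in>A. z p * c p e r)" using assms(1,2) by (simp add: sum_unitv)
  also have "\<dots> = (\<Sum>p\<in>A. (if p = r then 1 else 0) * z p)"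
    by (intro sum.cong refl) (simp add: unit)
  also have "\<dots> = z r" using assms(1) z by (cases "r \<in> A") (simp_all add: sum_unitv)
  finally show "sc_mul c A z (unitv e) r = z r" .
qed

lemma sc_mul_assoc:
  assumes h: "\<And>p q s r. p\<in>A \<Longrightarrow> q\<in>A \<Longrightarrow> s\<in>A \<Longrightarrow> (\<Sum>m\<in>A. c p q m * c m s r) = (\<Sum>m\<in>A. c q s m * c p m r)"
  shows "sc_mul c A (sc_mul c A u v) w = sc_mul c A u (sc_mul c A v w)"
proof (rule ext)
  fix r
  have "sc_mul c A (sc_mul c A u v) w r = (\<Sum>m\<in>A. \<Sum>s\<in>A. \<Sum>p\<in>A. \<Sum>q\<in>A. u p * v q * w s * (c p q m * c m s r))"
    unfolding sc_mul_def by (simp only: sum_distrib_right) (intro sum.cong refl; simp add: mult_ac)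
  also have "\<dots> = (\<Sum>m\<in>A. \<Sum>p\<in>A. \<Sum>s\<in>A. \<Sum>q\<in>A. u p * v q * w s * (c p q m * c m s r))"
    by (rule sum.cong[OF refl], rule sum.swap)
  also have "\<dots> = (\<Sum>m\<in>A. \<Sum>p\<in>A. \<Sum>q\<in>A. \<Sum>s\<in>A. u p * v q * w s * (c p q m * c m s r))"
    by (rule sum.cong[OF refl], rule sum.cong[OF refl], rule sum.swap)
  also have "\<dots> = (\<Sum>p\<in>A. \<Sum>m\<in>A. \<Sum>q\<in>A. \<Sum>s\<in>A. u p * v q * w s * (c p q m * c m s r))"
    by (rule sum.swap)
  also have "\<dots> = (\<Sum>p\<in>A. \<Sum>q\<in>A. \<Sum>m\<in>A. \<Sum>s\<in>A. u p * v q * w s * (c p q m * c m s r))"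
    by (rule sum.cong[OF refl], rule sum.swap)
  also have "\<dots> = (\<Sum>p\<in>A. \<Sum>q\<in>A. \<Sum>s\<in>A. \<Sum>m\<in>A. u p * v q * w s * (c p q m * c m s r))"
    by (rule sum.cong[OF refl], rule sum.cong[OF refl], rule sum.swap)
  also have "\<dots> = (\<Sum>p\<in>A. \<Sum>q\<in>A. \<Sum>s\<in>A. u p * v q * w s * (\<Sum>m\<in>A. c p q m * c m s r))"
    by (simp add: sum_distrib_left)
  also have "\<dots> = (\<Sum>p\<in>A. \<Sum>q\<in>A. \<Sum>s\<in>A. u p * v q * w s * (\<Sum>m\<in>A. c q s m * c p m r))"
    by (intro sum.cong refl) (simp add: h)
  also have "\<dots> = (\<Sum>p\<in>A. \<Sum>q\<in>A. \<Sum>s\<in>A. \<Sum>m\<in>A. u p * v q * w s * (c q s m * c p m r))"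
    by (simp add: sum_distrib_left)
  also have "\<dots> = (\<Sum>p\<in>A. \<Sum>q\<in>A. \<Sum>m\<in>A. \<Sum>s\<in>A. u p * v q * w s * (c q s m * c p m r))"
    by (rule sum.cong[OF refl], rule sum.cong[OF refl], rule sum.swap)
  also have "\<dots> = (\<Sum>p\<in>A. \<Sum>m\<in>A. \<Sum>q\<in>A. \<Sum>s\<in>A. u p * v q * w s * (c q s m * c p m r))"
    by (rule sum.cong[OF refl], rule sum.swap)
  also have "\<dots> = sc_mul c A u (sc_mul c A v w) r"
    unfolding sc_mul_def by (simp only: sum_distrib_right sum_distrib_left) (intro sum.cong refl; simp add: mult_ac)
  finally show "sc_mul c A (sc_mul c A u v) w r = sc_mul c A u (sc_mul c A v w) r" .
qed

context imag_unit
begin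

lemma sc_mul_vec:
  assumes "finite A" and c: "\<And>p q. p \<in> A \<Longrightarrow> q \<in> A \<Longrightarrow> c p q = vec (t p q)"
    and "sv_in A X" "sv_in A Y"
  shows "sc_mul c A (vec X) (vec Y) = vec (sv_bilin t X Y)"
  by (rule bilinear_vec[where I=A and J=A])
     (use assms in \<open>auto simp: sc_mul_add1 sc_mul_sm1 sc_mul_z1 sc_mul_add2 sc_mul_sm2 sc_mul_z2 sc_mul_unitv\<close>)

end

lemma Bs_mem[simp]: "((a,b) \<in> Bs) = (a \<le> 1 \<and> b \<le> 3)"
  by (auto simp: Bs_def)
lemma finite_Bs[simp]: "finite Bs"
  by (simp add: Bs_def)
lemma Bs_eq: "Bs = {(0,0),(0,1),(0,2),(0,3),(1,0),(1,1),(1,2),(1,3)}"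
  by (auto simp: Bs_def)
lemma ball_Bs: "(\<forall>p\<in>Bs. P p) \<longleftrightarrow> P (0,0) \<and> P (0,1) \<and> P (0,2) \<and> P (0,3) \<and> P (1,0) \<and> P (1,1) \<and> P (1,2) \<and> P (1,3)"
  by (simp add: Bs_eq)
lemma finite_B3[simp]: "finite B3"
  by (simp add: B3_def)

lemma eb_unitv: "eb = unitv"
  by (rule ext) (simp add: eb_def unitv_def fun_eq_iff)

definition mtab :: "idx \<Rightarrow> idx \<Rightarrow> idx svec" where
  "mtab p q = (if snd p + snd q < 4
     then [(((fst p + fst q) mod 2, snd p + snd q), ((-1)^(snd p * fst q), 0, 0))] else [])"

definition mtab2 :: "idx \<times> idx \<Rightarrow> idx \<times> idx \<Rightarrow> (idx \<times> idx) svec" where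
  "mtab2 k l = sv_tens (mtab (fst k) (fst l)) (mtab (snd k) (snd l))"

definition mtab3 :: "idx \<times> idx \<times> idx \<Rightarrow> idx \<times> idx \<times> idx \<Rightarrow> (idx \<times> idx \<times> idx) svec" where
  "mtab3 k l = sv_tens (mtab (fst k) (fst l))
                 (sv_tens (mtab (fst (snd k)) (fst (snd l))) (mtab (snd (snd k)) (snd (snd l))))"

definition sc2 :: "idx \<times> idx \<Rightarrow> idx \<times> idx \<Rightarrow> idx \<times> idx \<Rightarrow> 'k::field" where
  "sc2 x y r = bm (fst x) (fst y) (fst r) * bm (snd x) (snd y) (snd r)"

definition sc3 :: "idx \<times> idx \<times> idx \<Rightarrow> idx \<times> idx \<times> idx \<Rightarrow> idx \<times> idx \<times> idx \<Rightarrow> 'k::field" where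
  "sc3 x y r = bm (fst x) (fst y) (fst r) * bm (fst (snd x)) (fst (snd y)) (fst (snd r))
               * bm (snd (snd x)) (snd (snd y)) (snd (snd r))"

lemma hmul_sc: "hmul = sc_mul bm Bs"
  by (intro ext) (simp add: hmul_def sc_mul_def)
lemma hmul2_sc: "hmul2 = sc_mul sc2 (Bs \<times> Bs)"
  by (intro ext) (simp add: hmul2_def sc_mul_def sc2_def split_def mult.assoc)
lemma hmul3_sc: "hmul3 = sc_mul sc3 B3"
  by (intro ext) (simp add: hmul3_def sc_mul_def sc3_def B3_def split_def mult.assoc)

lemma bm_outside: "p \<in> Bs \<Longrightarrow> q \<in> Bs \<Longrightarrow> r \<notin> Bs \<Longrightarrow> bm p q r = 0"
  by (cases p, cases q, cases r) (auto simp: bm_def hsmul_def eb_def)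

lemma bm_unit_left: "q \<in> Bs \<Longrightarrow> bm (0,0) q r = (if r = q then 1 else 0)"
  by (cases q) (auto simp: bm_def hsmul_def eb_def)
lemma bm_unit_right: "q \<in> Bs \<Longrightarrow> bm q (0,0) r = (if r = q then 1 else 0)"
  by (cases q) (auto simp: bm_def hsmul_def eb_def)

lemma sum_bm:
  assumes "a \<in> Bs" "b \<in> Bs"
  shows "(\<Sum>m\<in>Bs. bm a b m * F m) = (if snd a + snd b < 4
    then (-1)^(snd a * fst b) * F ((fst a + fst b) mod 2, snd a + snd b) else (0::'k::field))"
proof (cases "snd a + snd b < 4")
  case True
  have e: "bm a b m * F m = (-1)^(snd a * fst b) * ((if m = ((fst a + fst b) mod 2, snd a + snd b) then 1 else 0) * F m)" for m
    using True by (simp add: bm_def hsmul_def eb_def)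
  have "((fst a + fst b) mod 2, snd a + snd b) \<in> Bs" using True by simp
  then show ?thesis using True by (simp only: e sum_distrib_left[symmetric] sum_unitv finite_Bs if_True)
next
  case False then show ?thesis by (simp add: bm_def)
qed

lemma bm_assoc:
  assumes a: "a \<in> Bs" and b: "b \<in> Bs" and c: "c \<in> Bs"
  shows "(\<Sum>m\<in>Bs. bm a b m * bm m c r) = (\<Sum>m\<in>Bs. bm b c m * (bm a m r :: 'k::field))"
proof -
  obtain a1 a2 b1 b2 c1 c2 where ab: "a = (a1,a2)" "b = (b1,b2)" "c = (c1,c2)"
    by (cases a, cases b, cases c) auto
  have b1: "b1 = 0 \<or> b1 = 1" and c1: "c1 = 0 \<or> c1 = 1" and a1: "a1 = 0 \<or> a1 = 1"
    using a b c ab by auto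
  have m1sq: "((-1::'k)^n) * (-1)^n = 1" for n
    by (simp add: power_mult_distrib[symmetric])
  have "(\<Sum>m\<in>Bs. bm a b m * bm m c r) = (\<Sum>m\<in>Bs. bm a b m * (\<lambda>m. bm m c r) m)" by simp
  also have "\<dots> = (if a2 + b2 < 4 then (-1)^(a2 * b1) * bm ((a1 + b1) mod 2, a2 + b2) c r else 0)"
    using a b ab by (simp only: sum_bm) simp
  also have "\<dots> = (\<Sum>m\<in>Bs. bm b c m * (\<lambda>m. bm a m r) m)"
    using b c ab a1 b1 c1 by (simp only: sum_bm) (auto simp: bm_def hsmul_def eb_def algebra_simps power_add m1sq)
  finally show ?thesis by simp
qed
lemma sum_prod3:
  fixes f :: "'a \<Rightarrow> 'd::comm_semiring_1"
  assumes "finite A" "finite B" "finite C"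
  shows "(\<Sum>m\<in>A\<times>B\<times>C. f (fst m) * g (fst (snd m)) * h (snd (snd m))) = sum f A * sum g B * sum h C"
proof -
  have "sum f A * sum g B * sum h C = (\<Sum>a\<in>A. \<Sum>b\<in>B. f a * g b) * sum h C"
    by (simp only: sum_product[of f A g B])
  also have "\<dots> = (\<Sum>a\<in>A. \<Sum>b\<in>B. f a * g b * sum h C)"
    by (simp only: sum_distrib_right)
  also have "\<dots> = (\<Sum>a\<in>A. \<Sum>b\<in>B. \<Sum>c\<in>C. f a * g b * h c)"
    by (simp only: sum_distrib_left)
  also have "\<dots> = (\<Sum>a\<in>A. \<Sum>x\<in>B\<times>C. f a * g (fst x) * h (snd x))"
    by (rule sum.cong[OF refl]) (simp add: sum.cartesian_product split_def)
  also have "\<dots> = (\<Sum>m\<in>A\<times>B\<times>C. f (fst m) * g (fst (snd m)) * h (snd (snd m)))"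
    by (simp add: sum.cartesian_product split_def)
  finally show ?thesis by simp
qed

lemma sc3_assoc:
  assumes "p \<in> B3" "q \<in> B3" "s \<in> B3"
  shows "(\<Sum>m\<in>B3. sc3 p q m * sc3 m s r) = (\<Sum>m\<in>B3. sc3 q s m * (sc3 p m r :: 'k::field))"
proof -
  have "(\<Sum>m\<in>B3. sc3 p q m * sc3 m s r) =
    (\<Sum>m\<in>Bs\<times>Bs\<times>Bs. (\<lambda>m1. bm (fst p) (fst q) m1 * bm m1 (fst s) (fst r)) (fst m) *
        (\<lambda>m2. bm (fst (snd p)) (fst (snd q)) m2 * bm m2 (fst (snd s)) (fst (snd r))) (fst (snd m)) *
        (\<lambda>m3. bm (snd (snd p)) (snd (snd q)) m3 * bm m3 (snd (snd s)) (snd (snd r))) (snd (snd m)))"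
    by (simp add: sc3_def B3_def mult_ac)
  also have "\<dots> = (\<Sum>m1\<in>Bs. bm (fst p) (fst q) m1 * bm m1 (fst s) (fst r)) *
        (\<Sum>m2\<in>Bs. bm (fst (snd p)) (fst (snd q)) m2 * bm m2 (fst (snd s)) (fst (snd r))) *
        (\<Sum>m3\<in>Bs. bm (snd (snd p)) (snd (snd q)) m3 * bm m3 (snd (snd s)) (snd (snd r)))"
    by (rule sum_prod3) simp_all
  also have "\<dots> = (\<Sum>m1\<in>Bs. bm (fst q) (fst s) m1 * bm (fst p) m1 (fst r)) *
        (\<Sum>m2\<in>Bs. bm (fst (snd q)) (fst (snd s)) m2 * bm (fst (snd p)) m2 (fst (snd r))) *
        (\<Sum>m3\<in>Bs. bm (snd (snd q)) (snd (snd s)) m3 * bm (snd (snd p)) m3 (snd (snd r)))"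
    using assms by (simp add: bm_assoc B3_def mem_Times_iff)
  also have "\<dots> = (\<Sum>m\<in>Bs\<times>Bs\<times>Bs. (\<lambda>m1. bm (fst q) (fst s) m1 * bm (fst p) m1 (fst r)) (fst m) *
        (\<lambda>m2. bm (fst (snd q)) (fst (snd s)) m2 * bm (fst (snd p)) m2 (fst (snd r))) (fst (snd m)) *
        (\<lambda>m3. bm (snd (snd q)) (snd (snd s)) m3 * bm (snd (snd p)) m3 (snd (snd r))) (snd (snd m)))"
    by (rule sum_prod3[symmetric]) simp_all
  also have "\<dots> = (\<Sum>m\<in>B3. sc3 q s m * sc3 p m r)"
    by (simp add: sc3_def B3_def mult_ac)
  finally show ?thesis .
qed

lemma hmul3_assoc: "hmul3 (hmul3 u v) w = hmul3 u (hmul3 v w)"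
  unfolding hmul3_sc by (rule sc_mul_assoc) (rule sc3_assoc)

lemma one3_unitv: "one3 = unitv ((0,0),(0,0),(0,0))"
  by (rule ext) (simp add: one3_def tens3_def one1_def eb_def unitv_def split_def prod_eq_iff)

lemma hmul3_one_left:
  assumes "z \<in> H3sp" shows "hmul3 one3 z = z"
proof -
  have z: "\<And>r. r \<notin> B3 \<Longrightarrow> z r = 0" using assms unfolding H3sp_def B3_def by blast
  show ?thesis unfolding hmul3_sc one3_unitv
    by (rule sc_mul_unit_left[OF finite_B3 _ _ z]) (auto simp: B3_def sc3_def bm_unit_left prod_eq_iff)
qed

lemma hmul3_one_right:
  assumes "z \<in> H3sp" shows "hmul3 z one3 = z"
proof -
  have z: "\<And>r. r \<notin> B3 \<Longrightarrow> z r = 0" using assms unfolding H3sp_def B3_def by blast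
  show ?thesis unfolding hmul3_sc one3_unitv
    by (rule sc_mul_unit_right[OF finite_B3 _ _ z]) (auto simp: B3_def sc3_def bm_unit_right prod_eq_iff)
qed

context imag_unit
begin

lemma vec_Hsp: "sv_in Bs A \<Longrightarrow> vec A \<in> Hsp"
  by (auto simp: Hsp_def vec_outside)

lemma vec_H3sp: "sv_in (Bs\<times>Bs\<times>Bs) A \<Longrightarrow> vec A \<in> H3sp"
  by (auto simp: H3sp_def B3_def vec_outside)

lemma bm_vec: "bm p q = vec (mtab p q)"
  by (rule ext) (auto simp: bm_def mtab_def vec_Cons vec_Nil dval_def hsmul_def eb_def)

lemma hmul_vec: "sv_in Bs A \<Longrightarrow> sv_in Bs B \<Longrightarrow> hmul (vec A) (vec B) = vec (sv_bilin mtab A B)"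
  unfolding hmul_sc by (rule sc_mul_vec) (simp_all add: bm_vec)

lemma hmul2_vec:
  "sv_in (Bs\<times>Bs) A \<Longrightarrow> sv_in (Bs\<times>Bs) B \<Longrightarrow> hmul2 (vec A) (vec B) = vec (sv_bilin mtab2 A B)"
  unfolding hmul2_sc
  by (rule sc_mul_vec) (auto simp: sc2_def mtab2_def bm_vec vec_tens fun_eq_iff)

lemma hmul3_vec:
  "sv_in (Bs\<times>Bs\<times>Bs) A \<Longrightarrow> sv_in (Bs\<times>Bs\<times>Bs) B \<Longrightarrow> hmul3 (vec A) (vec B) = vec (sv_bilin mtab3 A B)"
  unfolding hmul3_sc B3_def
  by (rule sc_mul_vec) (auto simp: sc3_def mtab3_def bm_vec vec_tens fun_eq_iff mult.assoc)

lemma tens2_vec: "tens2 (vec A) (vec B) = vec (sv_tens A B)"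
  by (rule ext) (auto simp: tens2_def vec_tens)
lemma tens3_vec: "tens3 (vec A) (vec B) (vec C) = vec (sv_tens A (sv_tens B C))"
  by (rule ext) (auto simp: tens3_def vec_tens mult.assoc)
lemma flip2_vec: "flip2 (vec A) = vec (sv_flip A)"
  by (rule ext) (auto simp: flip2_def vec_flip)
lemma hadd_vec: "hadd (vec A) (vec B) = vec (sv_add A B)"
  by (rule ext) (simp add: hadd_def vec_add)
lemma hsmul_vec: "hsmul (dval c) (vec A) = vec (sv_scale c A)"
  by (rule ext) (simp add: hsmul_def vec_scale)
lemma eb_vec: "eb p = vec [(p, (1,0,0))]"
  by (rule ext) (simp add: eb_def vec_Cons vec_Nil dval_def)

end

definition tens_map :: "(idx \<Rightarrow> 'k::field H1) \<Rightarrow> 'k H2 \<Rightarrow> 'k H2" where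
  "tens_map F w = (\<lambda>r. \<Sum>x\<in>Bs\<times>Bs. w x * F (fst x) (fst r) * F (snd x) (snd r))"

lemma SS2_tens_map: "SS2 j = tens_map (\<lambda>p. Santi j (eb p))"
  by (intro ext) (simp add: SS2_def tens_map_def split_def)

lemma SinvSinv2_tens_map: "SinvSinv2 j = tens_map (\<lambda>p. Sinv j (eb p))"
  by (intro ext) (simp add: SinvSinv2_def tens_map_def split_def)

lemma linext_add: "linext f (hadd u v) = hadd (linext f u) (linext f v)"
  by (rule ext) (simp add: linext_def hadd_def distrib_right sum.distrib)
lemma linext_sm: "linext f (hsmul c u) = hsmul c (linext f u)"
  by (rule ext) (simp add: linext_def hsmul_def sum_distrib_left mult.assoc)
lemma linext_zero: "linext f (\<lambda>_. 0) = (\<lambda>_. 0)"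
  by (rule ext) (simp add: linext_def)
lemma linext_unitv: "p \<in> Bs \<Longrightarrow> linext f (unitv p) = f p"
  by (rule ext) (simp add: linext_def unitv_def sum_unitv)

lemma linext_comp: "linext g (linext f y) = linext (\<lambda>q. linext g (f q)) y"
proof (rule ext)
  fix r
  have "linext g (linext f y) r = (\<Sum>p\<in>Bs. \<Sum>q\<in>Bs. y q * (f q p * g p r))"
    by (simp add: linext_def sum_distrib_right mult.assoc)
  also have "\<dots> = (\<Sum>q\<in>Bs. \<Sum>p\<in>Bs. y q * (f q p * g p r))" by (rule sum.swap)
  also have "\<dots> = linext (\<lambda>q. linext g (f q)) y r"
    by (simp add: linext_def sum_distrib_left)
  finally show "linext g (linext f y) r = linext (\<lambda>q. linext g (f q)) y r" .
qed

lemma linext_cong: "(\<And>q. q \<in> Bs \<Longrightarrow> f q = f' q) \<Longrightarrow> linext f y = linext f' y"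
  by (rule ext) (simp add: linext_def)

lemma linext_unitv_id: "y \<in> Hsp \<Longrightarrow> linext unitv y = y"
proof (rule ext)
  fix r assume y: "y \<in> Hsp"
  have "linext unitv y r = (\<Sum>p\<in>Bs. (if p = r then 1 else 0) * y p)"
    unfolding linext_def by (rule sum.cong) (auto simp: unitv_def)
  also have "\<dots> = (if r \<in> Bs then y r else 0)" by (simp only: sum_unitv finite_Bs)
  also have "\<dots> = y r" using y unfolding Hsp_def by (cases r) auto
  finally show "linext unitv y r = y r" .
qed

lemma linext_Hsp: "(\<And>p. p \<in> Bs \<Longrightarrow> f p \<in> Hsp) \<Longrightarrow> linext f y \<in> Hsp"
  by (simp add: Hsp_def linext_def)

lemma eb_Hsp: "p \<in> Bs \<Longrightarrow> eb p \<in> Hsp"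
  by (auto simp: Hsp_def eb_def)

lemma hsmul_Hsp: "u \<in> Hsp \<Longrightarrow> hsmul c u \<in> Hsp"
  by (simp add: Hsp_def hsmul_def)

lemma fev_add: "fev l (hadd u v) = fev l u + fev l v"
  by (simp add: fev_def hadd_def distrib_left sum.distrib)
lemma fev_sm: "fev l (hsmul c u) = c * fev l u"
  by (simp add: fev_def hsmul_def sum_distrib_left mult_ac)
lemma fev_scale_functional: "fev (hsmul d l) u = d * fev l u"
  by (simp add: fev_def hsmul_def sum_distrib_left mult_ac)
lemma fev_cong: "(\<And>a. a \<in> Bs \<Longrightarrow> l a = l' a) \<Longrightarrow> fev l u = fev l' u"
  by (simp add: fev_def)

context imag_unit
begin

lemma linext_vec:
  "(\<And>p. p \<in> Bs \<Longrightarrow> f p = vec (g p)) \<Longrightarrow> sv_in Bs A \<Longrightarrow> linext f (vec A) = vec (sv_lin g A)"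
  by (rule linear_vec[where I=Bs]) (simp_all add: linext_add linext_sm linext_zero linext_unitv)

lemma tens_map_vec:
  assumes F: "\<And>p. p \<in> Bs \<Longrightarrow> F p = vec (g p)" and A: "sv_in (Bs\<times>Bs) A"
  shows "tens_map F (vec A) = vec (sv_lin (\<lambda>k. sv_tens (g (fst k)) (g (snd k))) A)"
proof (rule linear_vec[where I="Bs\<times>Bs", OF _ _ _ _ A])
  fix k :: "idx \<times> idx" assume k: "k \<in> Bs \<times> Bs"
  show "tens_map F (unitv k) = vec (sv_tens (g (fst k)) (g (snd k)))"
  proof (rule ext)
    fix r :: "idx \<times> idx"
    have "tens_map F (unitv k) r = (\<Sum>x\<in>Bs\<times>Bs. (if x = k then 1 else 0) * (F (fst x) (fst r) * F (snd x) (snd r)))"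
      by (simp add: tens_map_def unitv_def mult.assoc)
    also have "\<dots> = F (fst k) (fst r) * F (snd k) (snd r)" using k by (simp add: sum_unitv)
    finally show "tens_map F (unitv k) r = vec (sv_tens (g (fst k)) (g (snd k))) r"
      using k F by (cases r) (simp add: vec_tens mem_Times_iff)
  qed
qed (auto simp: tens_map_def hadd_def hsmul_def distrib_right sum.distrib sum_distrib_left mult.assoc)

lemma eps_vec: "sv_in Bs A \<Longrightarrow> eps (vec A) = sv_pair (\<lambda>p. if snd p = 0 then 1 else 0) A"
  by (rule functional_vec[where I=Bs])
     (auto simp: eps_def hadd_def hsmul_def distrib_right sum.distrib sum_distrib_left mult.assoc unitv_def sum_unitv)

lemma muv_vec: "sv_in Bs A \<Longrightarrow> muv (vec A) = sv_pair (\<lambda>p. if snd p = 0 then (-1)^fst p else 0) A"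
  by (rule functional_vec[where I=Bs])
     (auto simp: muv_def hadd_def hsmul_def distrib_right sum.distrib sum_distrib_left mult.assoc unitv_def sum_unitv)

lemma fev_vec: "sv_in Bs A \<Longrightarrow> fev l (vec A) = sv_pair l A"
proof (rule functional_vec[where I=Bs])
  fix k assume "k \<in> Bs"
  then show "fev l (unitv k) = l k"
    using sum_unitv[of Bs k l] by (simp add: fev_def unitv_def mult.commute)
qed (auto simp: fev_def hadd_def hsmul_def distrib_left sum.distrib sum_distrib_left mult.left_commute)

definition sv_col :: "idx \<Rightarrow> (idx \<times> idx) svec \<Rightarrow> idx svec" where
  "sv_col r M = map (\<lambda>(k,c). (fst k, c)) (filter (\<lambda>(k,c). snd k = r) M)"
definition sv_row :: "idx \<Rightarrow> (idx \<times> idx) svec \<Rightarrow> idx svec" where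
  "sv_row r M = map (\<lambda>(k,c). (snd k, c)) (filter (\<lambda>(k,c). fst k = r) M)"

lemma fun_tens_id_vec: "sv_in (Bs\<times>Bs) M \<Longrightarrow> fun_tens_id l (vec M) r = sv_pair l (sv_col r M)"
proof -
  assume M: "sv_in (Bs\<times>Bs) M"
  have "fun_tens_id l (vec M) r = sv_pair (\<lambda>k. if snd k = r then l (fst k) else 0) M"
  proof (rule functional_vec[where I="Bs\<times>Bs", OF _ _ _ _ M])
    fix k :: "idx \<times> idx" assume k: "k \<in> Bs \<times> Bs"
    have "fun_tens_id l (unitv k) r = (\<Sum>a\<in>Bs. (if a = fst k then 1 else 0) * (if r = snd k then l a else 0))"
      unfolding fun_tens_id_def by (rule sum.cong) (auto simp: unitv_def prod_eq_iff)
    then show "fun_tens_id l (unitv k) r = (if snd k = r then l (fst k) else 0)"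
      using k by (auto simp: sum_unitv mem_Times_iff)
  qed (auto simp: fun_tens_id_def hadd_def hsmul_def distrib_left sum.distrib sum_distrib_left mult.left_commute)
  also have "\<dots> = sv_pair l (sv_col r M)"
    unfolding sv_col_def by (induction M) (auto simp: sv_pair_Cons sv_pair_Nil)
  finally show ?thesis .
qed

lemma id_tens_fun_vec: "sv_in (Bs\<times>Bs) M \<Longrightarrow> id_tens_fun l (vec M) r = sv_pair l (sv_row r M)"
proof -
  assume M: "sv_in (Bs\<times>Bs) M"
  have "id_tens_fun l (vec M) r = sv_pair (\<lambda>k. if fst k = r then l (snd k) else 0) M"
  proof (rule functional_vec[where I="Bs\<times>Bs", OF _ _ _ _ M])
    fix k :: "idx \<times> idx" assume k: "k \<in> Bs \<times> Bs"
    have "id_tens_fun l (unitv k) r = (\<Sum>b\<in>Bs. (if b = snd k then 1 else 0) * (if r = fst k then l b else 0))"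
      unfolding id_tens_fun_def by (rule sum.cong) (auto simp: unitv_def prod_eq_iff)
    then show "id_tens_fun l (unitv k) r = (if fst k = r then l (snd k) else 0)"
      using k by (auto simp: sum_unitv mem_Times_iff)
  qed (auto simp: id_tens_fun_def hadd_def hsmul_def distrib_right sum.distrib sum_distrib_left mult.assoc)
  also have "\<dots> = sv_pair l (sv_row r M)"
    unfolding sv_row_def by (induction M) (auto simp: sv_pair_Cons sv_pair_Nil)
  finally show ?thesis .
qed

end

text \<open>The simplifier rules in sv_eval rewrite a closed expression in H(8) (built from the
  generators, products, tensor products, S, S^-1, Delta, \<dots>) into the form vec L for an explicit,
  normalised sparse vector L.\<close>
named_theorems sv_eval

lemmas [sv_eval] = sv_bilin_def sv_lin_def sv_add_def sv_scale_def sv_tens_def sv_flip_def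
  mtab_def mtab2_def mtab3_def sv_ins.simps dadd.simps dmul.simps dnorm.simps dzero.simps sv_in.simps

lemma funpow_small[sv_eval]:
  "(f ^^ 0) x = x" "(f ^^ 1) x = f x" "(f ^^ 2) x = f (f x)" "(f ^^ 3) x = f (f (f x))"
  by (simp_all add: numeral_2_eq_2 numeral_3_eq_3)

context imag_unit
begin

lemmas [sv_eval] = hmul_vec hmul2_vec hmul3_vec tens2_vec tens3_vec flip2_vec hadd_vec hsmul_vec eb_vec

lemma hsmul_numerals[sv_eval]:
  "hsmul (-1) u = hsmul (dval (-1,0,0)) u" "hsmul (-2) u = hsmul (dval (-2,0,0)) u"
  by (simp_all add: dval_def)

lemma hsmul_j: "hsmul j u = hsmul (dval (0,1,0)) u"
  by (simp add: dval_def)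

lemma one1_vec[sv_eval]: "one1 = vec [((0,0),(1,0,0))]"
  by (simp add: one1_def eb_vec)
lemma gel_vec[sv_eval]: "gel = vec [((1,0),(1,0,0))]"
  by (simp add: gel_def eb_vec)
lemma xel_vec[sv_eval]: "xel = vec [((0,1),(1,0,0))]"
  by (simp add: xel_def eb_vec)
lemma pplus_vec[sv_eval]: "pplus = vec [((0,0),(1,0,1)),((1,0),(1,0,1))]"
  by (rule ext) (simp add: pplus_def hsmul_def hadd_def one1_def gel_def eb_def vec_Cons vec_Nil dval_def)
lemma pminus_vec[sv_eval]: "pminus = vec [((0,0),(1,0,1)),((1,0),(-1,0,1))]"
  by (rule ext) (simp add: pminus_def hsmul_def hadd_def one1_def gel_def eb_def vec_Cons vec_Nil dval_def)
lemma one2_vec[sv_eval]: "one2 = vec [(((0,0),(0,0)),(1,0,0))]"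
  by (simp add: one2_def sv_eval)
lemma one3_vec[sv_eval]: "one3 = vec [(((0,0),(0,0),(0,0)),(1,0,0))]"
  by (simp add: one3_def sv_eval)
lemma alpha_vec[sv_eval]: "alpha = vec [((1,0),(1,0,0))]"
  by (simp add: alpha_def sv_eval)
lemma beta_vec[sv_eval]: "beta = vec [((0,0),(1,0,0))]"
  by (simp add: beta_def sv_eval)

schematic_goal Dx_vec: "Dx j = vec ?L"
  unfolding Dx_def hsmul_j by (simp add: sv_eval)

schematic_goal Sx_vec: "Sx j = vec ?L"
  unfolding Sx_def hsmul_j by (simp add: sv_eval)

end

section \<open>Antipode, comultiplication and reassociator on the basis\<close>

definition S_tab :: "idx \<Rightarrow> idx svec" where
  "S_tab p = (if p = (0,0) then [((0,0),(1,0,0))]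
    else if p = (0,1) then [((0,1),(-1,-1,1)), ((1,1),(1,-1,1))]
    else if p = (0,2) then [((0,2),(0,1,0))]
    else if p = (0,3) then [((0,3),(1,-1,1)), ((1,3),(1,1,1))]
    else if p = (1,0) then [((1,0),(1,0,0))]
    else if p = (1,1) then [((0,1),(-1,1,1)), ((1,1),(1,1,1))]
    else if p = (1,2) then [((1,2),(0,1,0))]
    else if p = (1,3) then [((0,3),(-1,-1,1)), ((1,3),(-1,1,1))]
    else [])"

definition Sinv_tab :: "idx \<Rightarrow> idx svec" where
  "Sinv_tab p = (if p = (0,0) then [((0,0),(1,0,0))]
    else if p = (0,1) then [((0,1),(-1,1,1)), ((1,1),(-1,-1,1))]
    else if p = (0,2) then [((0,2),(0,-1,0))]
    else if p = (0,3) then [((0,3),(1,1,1)), ((1,3),(-1,1,1))]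
    else if p = (1,0) then [((1,0),(1,0,0))]
    else if p = (1,1) then [((0,1),(1,1,1)), ((1,1),(1,-1,1))]
    else if p = (1,2) then [((1,2),(0,-1,0))]
    else if p = (1,3) then [((0,3),(1,-1,1)), ((1,3),(-1,-1,1))]
    else [])"

definition Delta_tab :: "idx \<Rightarrow> (idx \<times> idx) svec" where
  "Delta_tab p = (if p = (0,0) then [(((0,0),(0,0)),(1,0,0))]
    else if p = (0,1) then [(((0,0),(0,1)),(1,0,1)), (((0,0),(1,1)),(1,0,1)),
      (((0,1),(0,0)),(1,1,1)), (((0,1),(1,0)),(1,-1,1)), (((1,0),(0,1)),(1,0,1)),
      (((1,0),(1,1)),(-1,0,1))]
    else if p = (0,2) then [(((0,1),(0,1)),(1,1,1)), (((0,1),(1,1)),(1,1,1)),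
      (((0,2),(1,0)),(1,0,0)), (((1,0),(0,2)),(1,0,0)), (((1,1),(0,1)),(1,-1,1)),
      (((1,1),(1,1)),(-1,1,1))]
    else if p = (0,3) then [(((0,0),(0,3)),(1,0,1)), (((0,0),(1,3)),(-1,0,1)),
      (((0,2),(0,1)),(0,1,1)), (((0,2),(1,1)),(0,1,1)), (((0,3),(0,0)),(1,-1,1)),
      (((0,3),(1,0)),(1,1,1)), (((1,0),(0,3)),(1,0,1)), (((1,0),(1,3)),(1,0,1)),
      (((1,1),(0,2)),(1,-1,1)), (((1,1),(1,2)),(-1,-1,1)), (((1,2),(0,1)),(0,-1,1)),
      (((1,2),(1,1)),(0,1,1))]
    else if p = (1,0) then [(((1,0),(1,0)),(1,0,0))]
    else if p = (1,1) then [(((0,0),(0,1)),(-1,0,1)), (((0,0),(1,1)),(1,0,1)),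
      (((1,0),(0,1)),(1,0,1)), (((1,0),(1,1)),(1,0,1)), (((1,1),(0,0)),(1,-1,1)),
      (((1,1),(1,0)),(1,1,1))]
    else if p = (1,2) then [(((0,0),(1,2)),(1,0,0)), (((0,1),(0,1)),(-1,1,1)),
      (((0,1),(1,1)),(1,-1,1)), (((1,1),(0,1)),(1,1,1)), (((1,1),(1,1)),(1,1,1)),
      (((1,2),(0,0)),(1,0,0))]
    else if p = (1,3) then [(((0,0),(0,3)),(1,0,1)), (((0,0),(1,3)),(1,0,1)),
      (((0,1),(0,2)),(-1,-1,1)), (((0,1),(1,2)),(1,-1,1)), (((0,2),(0,1)),(0,1,1)),
      (((0,2),(1,1)),(0,-1,1)), (((1,0),(0,3)),(-1,0,1)), (((1,0),(1,3)),(1,0,1)),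
      (((1,2),(0,1)),(0,1,1)), (((1,2),(1,1)),(0,1,1)), (((1,3),(0,0)),(1,1,1)),
      (((1,3),(1,0)),(1,-1,1))]
    else [])"

text \<open>Phi = 1 - 2 p_- tensor p_- tensor p_-, expanded in the basis.\<close>
definition Phi_tab :: "(idx \<times> idx \<times> idx) svec" where "Phi_tab = [
      (((0,0),(0,0),(0,0)),(3,0,2)), (((0,0),(0,0),(1,0)),(1,0,2)), (((0,0),(1,0),(0,0)),(1,0,2)),
      (((0,0),(1,0),(1,0)),(-1,0,2)), (((1,0),(0,0),(0,0)),(1,0,2)),
      (((1,0),(0,0),(1,0)),(-1,0,2)), (((1,0),(1,0),(0,0)),(-1,0,2)), (((1,0),(1,0),(1,0)),(1,0,2))]"

lemmas [sv_eval] = S_tab_def Sinv_tab_def Delta_tab_def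

lemma sv_in_Sinv_tab: "sv_in Bs (Sinv_tab p)"
  by (simp add: Sinv_tab_def)
lemma sv_in_Phi_tab: "sv_in (Bs\<times>Bs\<times>Bs) Phi_tab"
  by (simp add: Phi_tab_def)

context imag_unit
begin

lemma Sbasis_tab: "p \<in> Bs \<Longrightarrow> Sbasis j p = vec (S_tab p)"
  unfolding Bs_eq
  by (elim insertE emptyE; (rule vec_eqI, (simp add: Sbasis_def Sx_vec sv_eval)+))

lemma Dbasis_tab: "p \<in> Bs \<Longrightarrow> Dbasis j p = vec (Delta_tab p)"
  unfolding Bs_eq
  by (elim insertE emptyE; (rule vec_eqI, (simp add: Dbasis_def Dg_def Dx_vec sv_eval)+))

lemma Santi_vec[sv_eval]: "sv_in Bs A \<Longrightarrow> Santi j (vec A) = vec (sv_lin S_tab A)"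
  unfolding Santi_def by (rule linext_vec) (auto simp: Sbasis_tab)

lemma Delta_vec[sv_eval]: "sv_in Bs A \<Longrightarrow> Delta j (vec A) = vec (sv_lin Delta_tab A)"
  unfolding Delta_def by (rule linext_vec) (auto simp: Dbasis_tab)

lemma Delta_add: "Delta j (hadd u v) = hadd (Delta j u) (Delta j v)"
  by (simp add: Delta_def linext_add)
lemma Delta_sm: "Delta j (hsmul c u) = hsmul c (Delta j u)"
  by (simp add: Delta_def linext_sm)

text \<open>The map T below is a two-sided inverse of S; hence it is the S^-1 of the definitions.\<close>
definition Tinv :: "'k H1 \<Rightarrow> 'k H1" where
  "Tinv = linext (\<lambda>p. vec (Sinv_tab p))"

lemma Santi_Sinv_tab: "p \<in> Bs \<Longrightarrow> Santi j (vec (Sinv_tab p)) = unitv p"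
  unfolding Bs_eq eb_unitv[symmetric] eb_vec
  by (elim insertE emptyE; (rule vec_eqI, (simp add: sv_eval sv_in_Sinv_tab)+))

lemma Tinv_S_tab: "p \<in> Bs \<Longrightarrow> Tinv (vec (S_tab p)) = unitv p"
  unfolding Bs_eq eb_unitv[symmetric] eb_vec Tinv_def
  by (elim insertE emptyE; (rule vec_eqI, (simp add: sv_eval linext_vec sv_in_Sinv_tab)+))

lemma Sinv_eq_Tinv:
  assumes h: "h \<in> Hsp" shows "Sinv j h = Tinv h"
  unfolding Sinv_def
proof (rule the_equality)
  show "Tinv h \<in> Hsp \<and> Santi j (Tinv h) = h"
  proof
    show "Tinv h \<in> Hsp" unfolding Tinv_def by (rule linext_Hsp) (simp add: vec_Hsp sv_in_Sinv_tab)
    have "Santi j (Tinv h) = linext (\<lambda>q. Santi j (vec (Sinv_tab q))) h"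
      unfolding Tinv_def Santi_def by (rule linext_comp)
    also have "\<dots> = linext unitv h" by (rule linext_cong) (simp add: Santi_Sinv_tab)
    also have "\<dots> = h" using h by (rule linext_unitv_id)
    finally show "Santi j (Tinv h) = h" .
  qed
next
  fix y assume y: "y \<in> Hsp \<and> Santi j y = h"
  have "y = linext unitv y" using y by (simp add: linext_unitv_id)
  also have "\<dots> = linext (\<lambda>q. Tinv (Sbasis j q)) y"
    by (rule linext_cong) (simp add: Sbasis_tab Tinv_S_tab)
  also have "\<dots> = Tinv (Santi j y)" unfolding Tinv_def Santi_def by (rule linext_comp[symmetric])
  finally show "y = Tinv h" using y by simp
qed

lemma Sinv_vec[sv_eval]: "sv_in Bs A \<Longrightarrow> Sinv j (vec A) = vec (sv_lin Sinv_tab A)"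
  by (simp add: Sinv_eq_Tinv vec_Hsp Tinv_def linext_vec)

lemma Sinv_unitv:
  assumes "p \<in> Bs" shows "Sinv j (unitv p) = vec (Sinv_tab p)"
proof -
  have "unitv p \<in> Hsp" using eb_Hsp[OF assms] by (simp add: eb_unitv)
  then have "Sinv j (unitv p) = Tinv (unitv p)" by (rule Sinv_eq_Tinv)
  also have "\<dots> = vec (Sinv_tab p)" using assms by (simp add: Tinv_def linext_unitv)
  finally show ?thesis .
qed

lemma Sinv_sm: "u \<in> Hsp \<Longrightarrow> Sinv j (hsmul c u) = hsmul c (Sinv j u)"
  by (simp add: Sinv_eq_Tinv hsmul_Hsp Tinv_def linext_sm)

lemma SS2_vec[sv_eval]:
  "sv_in (Bs\<times>Bs) A \<Longrightarrow> SS2 j (vec A) = vec (sv_lin (\<lambda>k. sv_tens (S_tab (fst k)) (S_tab (snd k))) A)"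
  unfolding SS2_tens_map
  by (rule tens_map_vec) (simp_all add: eb_unitv Santi_def linext_unitv Sbasis_tab)

lemma SinvSinv2_vec[sv_eval]:
  "sv_in (Bs\<times>Bs) A \<Longrightarrow> SinvSinv2 j (vec A) = vec (sv_lin (\<lambda>k. sv_tens (Sinv_tab (fst k)) (Sinv_tab (snd k))) A)"
  unfolding SinvSinv2_tens_map by (rule tens_map_vec) (simp_all add: eb_unitv Sinv_unitv)

lemma Phi_vec: "(Phi :: 'k H3) = vec Phi_tab"
  unfolding Phi_def by (rule vec_eqI) (simp add: sv_eval Phi_tab_def)+

text \<open>Phi is an involution, so the reassociator of H(8) is its own inverse.\<close>
lemma Phi_sq: "hmul3 Phi Phi = (one3 :: 'k H3)"
  unfolding Phi_vec by (rule vec_eqI) (simp add: sv_eval Phi_tab_def)+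

lemma Phiinv_eq_Phi: "Phiinv = (Phi :: 'k H3)"
  unfolding Phiinv_def
proof (rule the_equality)
  have "(Phi :: 'k H3) \<in> H3sp" by (simp add: Phi_vec vec_H3sp sv_in_Phi_tab)
  then show "(Phi :: 'k H3) \<in> H3sp \<and> hmul3 Phi Phi = (one3 :: 'k H3) \<and> hmul3 Phi Phi = (one3 :: 'k H3)"
    using Phi_sq by simp
next
  fix y assume y: "y \<in> H3sp \<and> hmul3 Phi y = one3 \<and> hmul3 y (Phi :: 'k H3) = one3"
  have P: "(Phi :: 'k H3) \<in> H3sp" by (simp add: Phi_vec vec_H3sp sv_in_Phi_tab)
  have "y = hmul3 y one3" using y by (simp add: hmul3_one_right)
  also have "\<dots> = hmul3 (hmul3 y Phi) Phi" by (simp add: Phi_sq hmul3_assoc)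
  also have "\<dots> = Phi" using y P by (simp add: hmul3_one_left)
  finally show "y = Phi" .
qed

end

section \<open>The elements gamma, delta, f, f^-1, p_R, q_R, p_L, q_L, U and V\<close>

context imag_unit
begin

text \<open>A copy of addition that the simplifier does not rearrange: sums of evaluated terms are
  merged pairwise into a single sparse vector (resp. a single pairing) instead.\<close>
definition padd :: "'k \<Rightarrow> 'k \<Rightarrow> 'k" where
  "padd x y = x + y"

definition sv_pair_padd :: "('i \<Rightarrow> 'k) \<Rightarrow> 'i svec \<Rightarrow> 'k" where
  "sv_pair_padd g xs = foldr (\<lambda>(k,c) acc. padd (dval c * g k) acc) xs 0"

lemma sv_pair_padd_eq: "sv_pair = sv_pair_padd"
  by (intro ext) (simp add: sv_pair_def sv_pair_padd_def padd_def)

lemma sv_pair_padd_Cons[sv_eval]: "sv_pair_padd g ((k,c)#xs) = padd (dval c * g k) (sv_pair_padd g xs)"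
  by (simp add: sv_pair_padd_def)
lemma sv_pair_padd_Nil[sv_eval]: "sv_pair_padd g [] = 0"
  by (simp add: sv_pair_padd_def)

lemma padd_vec[sv_eval]: "padd (vec A r) (vec B r) = vec (sv_add A B) r"
  by (simp add: padd_def vec_add)
lemma padd_zero[sv_eval]: "padd x 0 = x"
  by (simp add: padd_def)
lemma dval_times_vec[sv_eval]: "dval c * vec L r = vec (sv_scale c L) r"
  by (simp add: vec_scale)
lemma dval_times_dval[sv_eval]:
  "dval c * (dval d * x) = dval (dmul c d) * x" "dval c * dval d * x = dval (dmul c d) * x"
  by (simp_all add: dval_mul)

lemma sum_B3_vec:
  assumes "sv_in (Bs\<times>Bs\<times>Bs) A"
  shows "(\<Sum>(p1,p2,p3)\<in>B3. vec A (p1,p2,p3) * G p1 p2 p3) = sv_pair (\<lambda>(p1,p2,p3). G p1 p2 p3) A"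
proof -
  have "(\<Sum>(p1,p2,p3)\<in>B3. vec A (p1,p2,p3) * G p1 p2 p3)
      = (\<Sum>x\<in>Bs\<times>Bs\<times>Bs. vec A x * (\<lambda>(p1,p2,p3). G p1 p2 p3) x)"
    unfolding B3_def by (rule sum.cong) (auto simp: split_def)
  also have "\<dots> = sv_pair (\<lambda>(p1,p2,p3). G p1 p2 p3) A" using assms by (simp add: sum_vec)
  finally show ?thesis .
qed

lemma sum_B3_B3_vec:
  assumes "sv_in (Bs\<times>Bs\<times>Bs) A" "sv_in (Bs\<times>Bs\<times>Bs) B"
  shows "(\<Sum>(p1,p2,p3)\<in>B3. \<Sum>(q1,q2,q3)\<in>B3. vec A (p1,p2,p3) * vec B (q1,q2,q3) * G p1 p2 p3 q1 q2 q3)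
       = sv_pair (\<lambda>(p1,p2,p3). sv_pair (\<lambda>(q1,q2,q3). G p1 p2 p3 q1 q2 q3) B) A"
proof -
  have "(\<Sum>(p1,p2,p3)\<in>B3. \<Sum>(q1,q2,q3)\<in>B3. vec A (p1,p2,p3) * vec B (q1,q2,q3) * G p1 p2 p3 q1 q2 q3)
     = (\<Sum>(p1,p2,p3)\<in>B3. vec A (p1,p2,p3) * (\<Sum>(q1,q2,q3)\<in>B3. vec B (q1,q2,q3) * G p1 p2 p3 q1 q2 q3))"
    by (simp add: split_def sum_distrib_left mult.assoc)
  also have "\<dots> = (\<Sum>(p1,p2,p3)\<in>B3. vec A (p1,p2,p3) * sv_pair (\<lambda>(q1,q2,q3). G p1 p2 p3 q1 q2 q3) B)"
    using assms(2) by (simp only: sum_B3_vec)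
  also have "\<dots> = sv_pair (\<lambda>(p1,p2,p3). sv_pair (\<lambda>(q1,q2,q3). G p1 p2 p3 q1 q2 q3) B) A"
    using assms(1) by (rule sum_B3_vec)
  finally show ?thesis .
qed

text \<open>Each element is a sum over one or two copies of Phi = Phi^-1; the sums are expanded
  over the eight terms of Phi and evaluated.\<close>

schematic_goal gammaE_vec: "gammaE j = vec ?L"
  unfolding gammaE_def Phiinv_eq_Phi Phi_vec
  by (rule ext, simp only: sum_B3_B3_vec sv_in_Phi_tab sv_pair_padd_eq) (simp add: sv_eval Phi_tab_def)

schematic_goal deltaE_vec: "deltaE j = vec ?L"
  unfolding deltaE_def Phiinv_eq_Phi Phi_vec
  by (rule ext, simp only: sum_B3_B3_vec sv_in_Phi_tab sv_pair_padd_eq) (simp add: sv_eval Phi_tab_def)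

schematic_goal fE_vec: "fE j = vec ?L"
  unfolding fE_def Phiinv_eq_Phi Phi_vec gammaE_vec
  by (rule ext, simp only: sum_B3_vec sv_in_Phi_tab sv_pair_padd_eq) (simp add: sv_eval Phi_tab_def)

schematic_goal finvE_vec: "finvE j = vec ?L"
  unfolding finvE_def Phiinv_eq_Phi Phi_vec deltaE_vec
  by (rule ext, simp only: sum_B3_vec sv_in_Phi_tab sv_pair_padd_eq) (simp add: sv_eval Phi_tab_def)

schematic_goal pR_vec: "pR j = vec ?L"
  unfolding pR_def Phiinv_eq_Phi Phi_vec
  by (rule ext, simp only: sum_B3_vec sv_in_Phi_tab sv_pair_padd_eq) (simp add: sv_eval Phi_tab_def)

schematic_goal qR_vec: "qR j = vec ?L"
  unfolding qR_def Phi_vec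
  by (rule ext, simp only: sum_B3_vec sv_in_Phi_tab sv_pair_padd_eq) (simp add: sv_eval Phi_tab_def)

schematic_goal pL_vec: "pL j = vec ?L"
  unfolding pL_def Phi_vec
  by (rule ext, simp only: sum_B3_vec sv_in_Phi_tab sv_pair_padd_eq) (simp add: sv_eval Phi_tab_def)

schematic_goal qL_vec: "qL j = vec ?L"
  unfolding qL_def Phiinv_eq_Phi Phi_vec
  by (rule ext, simp only: sum_B3_vec sv_in_Phi_tab sv_pair_padd_eq) (simp add: sv_eval Phi_tab_def)

schematic_goal UU_vec: "UU j = vec ?L"
  unfolding UU_def finvE_vec qR_vec by (simp add: sv_eval)

schematic_goal VV_vec: "VV j = vec ?L"
  unfolding VV_def fE_vec pR_vec by (simp add: sv_eval)

end

section \<open>Reduction of the (co)integral conditions to basis elements\<close>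

lemma linear_eq_on_Hsp:
  fixes F G :: "'k::field H1 \<Rightarrow> 'b \<Rightarrow> 'k"
  assumes Fa: "\<And>u v. F (hadd u v) = hadd (F u) (F v)" and Fs: "\<And>c u. F (hsmul c u) = hsmul c (F u)"
    and Ga: "\<And>u v. G (hadd u v) = hadd (G u) (G v)" and Gs: "\<And>c u. G (hsmul c u) = hsmul c (G u)"
    and bas: "\<And>p. p \<in> Bs \<Longrightarrow> F (eb p) = G (eb p)"
    and h: "h \<in> Hsp"
  shows "F h = G h"
proof -
  define R where "R S = (\<lambda>r. if r \<in> S then h r else 0)" for S
  have hz: "hsmul 0 u = (\<lambda>_. 0)" for u :: "'x \<Rightarrow> 'k" by (simp add: hsmul_def)
  have z: "F (\<lambda>_. 0) = G (\<lambda>_. 0)"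
  proof -
    have "F (\<lambda>_. 0) = F (hsmul 0 (\<lambda>_. 0))" by (simp only: hz)
    also have "\<dots> = (\<lambda>_. 0)" by (subst Fs) (rule hz)
    also have "\<dots> = G (hsmul 0 (\<lambda>_. 0))" by (subst Gs) (rule hz[symmetric])
    also have "\<dots> = G (\<lambda>_. 0)" by (simp only: hz)
    finally show ?thesis .
  qed
  have "S \<subseteq> Bs \<longrightarrow> F (R S) = G (R S)" if "finite S" for S
    using that
  proof (induction S rule: finite_induct)
    case empty
    have "R {} = (\<lambda>_. 0)" by (simp add: R_def)
    then show ?case using z by simp
  next
    case (insert p S)
    show ?case
    proof
      assume sub: "insert p S \<subseteq> Bs"
      have e: "R (insert p S) = hadd (hsmul (h p) (eb p)) (R S)"
        using insert(2) by (auto simp: R_def hadd_def hsmul_def eb_def)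
      have IH: "F (R S) = G (R S)" using insert sub by simp
      have pB: "p \<in> Bs" using sub by simp
      show "F (R (insert p S)) = G (R (insert p S))"
        by (simp only: e Fa Fs Ga Gs bas[OF pB] IH)
    qed
  qed
  then have "F (R Bs) = G (R Bs)" by simp
  moreover have "R Bs = h" using h unfolding R_def Hsp_def by (auto simp: fun_eq_iff)
  ultimately show ?thesis by simp
qed

lemma linear_iff_on_basis:
  fixes F G :: "'k::field H1 \<Rightarrow> 'b \<Rightarrow> 'k"
  assumes "\<And>u v. F (hadd u v) = hadd (F u) (F v)" "\<And>c u. F (hsmul c u) = hsmul c (F u)"
    and "\<And>u v. G (hadd u v) = hadd (G u) (G v)" "\<And>c u. G (hsmul c u) = hsmul c (G u)"
  shows "(\<forall>h\<in>Hsp. F h = G h) \<longleftrightarrow> (\<forall>p\<in>Bs. F (eb p) = G (eb p))"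
  using linear_eq_on_Hsp[OF assms] eb_Hsp by blast

lemma fun_eq_on_Bs:
  "(\<And>r. r \<notin> Bs \<Longrightarrow> f r = 0) \<Longrightarrow> (\<And>r. r \<notin> Bs \<Longrightarrow> g r = (0::'k::field)) \<Longrightarrow>
   (f = g) \<longleftrightarrow> (\<forall>r\<in>Bs. f r - g r = 0)"
  by (auto simp: fun_eq_iff)

lemma fun_tens_id_add: "fun_tens_id L (hadd u v) = hadd (fun_tens_id L u) (fun_tens_id L v)"
  by (rule ext) (simp add: fun_tens_id_def hadd_def distrib_left sum.distrib)
lemma fun_tens_id_sm: "fun_tens_id L (hsmul c u) = hsmul c (fun_tens_id L u)"
  by (rule ext) (simp add: fun_tens_id_def hsmul_def sum_distrib_left mult_ac)
lemma id_tens_fun_add: "id_tens_fun L (hadd u v) = hadd (id_tens_fun L u) (id_tens_fun L v)"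
  by (rule ext) (simp add: id_tens_fun_def hadd_def distrib_right sum.distrib)
lemma id_tens_fun_sm: "id_tens_fun L (hsmul c u) = hsmul c (id_tens_fun L u)"
  by (rule ext) (simp add: id_tens_fun_def hsmul_def sum_distrib_left mult_ac)

lemma hmul2_outside:
  "r \<notin> Bs \<Longrightarrow> hmul2 w z (a, r) = 0" "r \<notin> Bs \<Longrightarrow> hmul2 w z (r, b) = 0"
  by (simp_all add: hmul2_sc sc_mul_def sc2_def bm_outside mem_Times_iff)

context imag_unit
begin

text \<open>The element
  rc_kernel h = S(p~^2) f^1 h_1 S^-1(q~^2 g^2) tensor S(p~^1) f^2 h_2 S^-1(q~^1 g^1)
  is the left-hand side of the defining identity before applying Lambda to its first factor.\<close>
definition rc_kernel :: "'k H1 \<Rightarrow> 'k H2" where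
  "rc_kernel h = hmul2 (hmul2 (hmul2 (SS2 j (flip2 (pL j))) (fE j)) (Delta j h))
                       (SinvSinv2 j (flip2 (hmul2 (qL j) (finvE j))))"

definition rc_rhs :: "'k H1 \<Rightarrow> 'k H1 \<Rightarrow> 'k H1" where
  "rc_rhs L h = (\<lambda>r. \<Sum>(p1, p2, p3)\<in>B3. Phi (p1, p2, p3) * muv (eb p3) *
            fev L (hmul h (Sinv j (eb p2))) * eb p1 r)"

lemma rc_rhs_outside: "r \<notin> Bs \<Longrightarrow> rc_rhs L h r = 0"
  unfolding rc_rhs_def B3_def by (intro sum.neutral ballI) (auto simp: eb_def split_def)

definition rc_defect :: "'k H1 \<Rightarrow> idx \<Rightarrow> idx \<Rightarrow> 'k" where
  "rc_defect L p r = fun_tens_id L (rc_kernel (eb p)) r - rc_rhs L (eb p) r"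

lemma right_coint_iff: "is_right_coint j L \<longleftrightarrow> (\<forall>p\<in>Bs. \<forall>r\<in>Bs. rc_defect L p r = 0)"
proof -
  have "is_right_coint j L = (\<forall>h\<in>Hsp. fun_tens_id L (rc_kernel h) = rc_rhs L h)"
    unfolding is_right_coint_def rc_kernel_def rc_rhs_def ..
  also have "\<dots> = (\<forall>p\<in>Bs. fun_tens_id L (rc_kernel (eb p)) = rc_rhs L (eb p))"
  proof (rule linear_iff_on_basis)
    show "fun_tens_id L (rc_kernel (hadd u v)) = hadd (fun_tens_id L (rc_kernel u)) (fun_tens_id L (rc_kernel v))" for u v
      by (simp only: rc_kernel_def Delta_add hmul2_sc sc_mul_add1 sc_mul_add2 fun_tens_id_add)
    show "fun_tens_id L (rc_kernel (hsmul c u)) = hsmul c (fun_tens_id L (rc_kernel u))" for c u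
      by (simp only: rc_kernel_def Delta_sm hmul2_sc sc_mul_sm1 sc_mul_sm2 fun_tens_id_sm)
    show "rc_rhs L (hadd u v) = hadd (rc_rhs L u) (rc_rhs L v)" for u v
      unfolding rc_rhs_def hmul_sc sc_mul_add1 fev_add
      by (rule ext) (simp add: hadd_def distrib_left distrib_right sum.distrib split_def)
    show "rc_rhs L (hsmul c u) = hsmul c (rc_rhs L u)" for c u
      unfolding rc_rhs_def hmul_sc sc_mul_sm1 fev_sm
      by (rule ext) (simp add: hsmul_def sum_distrib_left split_def mult_ac)
  qed
  also have "\<dots> = (\<forall>p\<in>Bs. \<forall>r\<in>Bs. rc_defect L p r = 0)"
    unfolding rc_defect_def
    by (intro ball_cong refl fun_eq_on_Bs)
       (simp_all add: fun_tens_id_def rc_kernel_def hmul2_outside rc_rhs_outside)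
  finally show ?thesis .
qed

definition lc_kernel :: "'k H1 \<Rightarrow> 'k H2" where
  "lc_kernel h = hmul2 (hmul2 (VV j) (Delta j h)) (UU j)"

definition lc_rhs :: "'k H1 \<Rightarrow> 'k H1 \<Rightarrow> 'k H1" where
  "lc_rhs l h = (\<lambda>r. \<Sum>(p1, p2, p3)\<in>B3. Phiinv (p1, p2, p3) * muv (eb p1) *
            fev l (hmul h (Santi j (eb p2))) * eb p3 r)"

lemma lc_rhs_outside: "r \<notin> Bs \<Longrightarrow> lc_rhs L h r = 0"
  unfolding lc_rhs_def B3_def by (intro sum.neutral ballI) (auto simp: eb_def split_def)

definition lc_defect :: "'k H1 \<Rightarrow> idx \<Rightarrow> idx \<Rightarrow> 'k" where
  "lc_defect l p r = id_tens_fun l (lc_kernel (eb p)) r - lc_rhs l (eb p) r"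

lemma left_coint_iff: "is_left_coint j l \<longleftrightarrow> (\<forall>p\<in>Bs. \<forall>r\<in>Bs. lc_defect l p r = 0)"
proof -
  have "is_left_coint j l = (\<forall>h\<in>Hsp. id_tens_fun l (lc_kernel h) = lc_rhs l h)"
    unfolding is_left_coint_def lc_kernel_def lc_rhs_def ..
  also have "\<dots> = (\<forall>p\<in>Bs. id_tens_fun l (lc_kernel (eb p)) = lc_rhs l (eb p))"
  proof (rule linear_iff_on_basis)
    show "id_tens_fun l (lc_kernel (hadd u v)) = hadd (id_tens_fun l (lc_kernel u)) (id_tens_fun l (lc_kernel v))" for u v
      by (simp only: lc_kernel_def Delta_add hmul2_sc sc_mul_add1 sc_mul_add2 id_tens_fun_add)
    show "id_tens_fun l (lc_kernel (hsmul c u)) = hsmul c (id_tens_fun l (lc_kernel u))" for c u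
      by (simp only: lc_kernel_def Delta_sm hmul2_sc sc_mul_sm1 sc_mul_sm2 id_tens_fun_sm)
    show "lc_rhs l (hadd u v) = hadd (lc_rhs l u) (lc_rhs l v)" for u v
      unfolding lc_rhs_def hmul_sc sc_mul_add1 fev_add
      by (rule ext) (simp add: hadd_def distrib_left distrib_right sum.distrib split_def)
    show "lc_rhs l (hsmul c u) = hsmul c (lc_rhs l u)" for c u
      unfolding lc_rhs_def hmul_sc sc_mul_sm1 fev_sm
      by (rule ext) (simp add: hsmul_def sum_distrib_left split_def mult_ac)
  qed
  also have "\<dots> = (\<forall>p\<in>Bs. \<forall>r\<in>Bs. lc_defect l p r = 0)"
    unfolding lc_defect_def
    by (intro ball_cong refl fun_eq_on_Bs)
       (simp_all add: id_tens_fun_def lc_kernel_def hmul2_outside lc_rhs_outside)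
  finally show ?thesis .
qed

lemma left_int_iff:
  "is_left_int t \<longleftrightarrow> t \<in> Hsp \<and> (\<forall>p\<in>Bs. hmul (eb p) t = hsmul (eps (eb p)) t)"
proof -
  have "(\<forall>h\<in>Hsp. hmul h t = hsmul (eps h) t) \<longleftrightarrow> (\<forall>p\<in>Bs. hmul (eb p) t = hsmul (eps (eb p)) t)"
  proof (rule linear_iff_on_basis)
    show "hmul (hadd u v) t = hadd (hmul u t) (hmul v t)" for u v
      by (simp only: hmul_sc sc_mul_add1)
    show "hmul (hsmul c u) t = hsmul c (hmul u t)" for c u
      by (simp only: hmul_sc sc_mul_sm1)
    show "hsmul (eps (hadd u v)) t = hadd (hsmul (eps u) t) (hsmul (eps v) t)" for u v
      by (rule ext) (simp add: hadd_def hsmul_def eps_def distrib_right sum.distrib)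
    show "hsmul (eps (hsmul c u)) t = hsmul c (hsmul (eps u) t)" for c u
      by (rule ext) (simp add: hsmul_def eps_def sum_distrib_left mult_ac)
  qed
  then show ?thesis unfolding is_left_int_def by blast
qed

end

context imag_unit
begin

text \<open>Rules turning pairings of a functional with evaluated expressions into a single pairing
  sv_pair l D with an explicit sparse vector D.\<close>
named_theorems fn_eval

lemma sv_pair_scale_left[fn_eval]: "dval c * sv_pair g A = sv_pair g (sv_scale c A)"
  by (simp add: sv_pair_scale)
lemma sv_pair_scale_right[fn_eval]: "sv_pair g A * dval c = sv_pair g (sv_scale c A)"
  by (simp add: sv_pair_scale mult.commute)
lemma padd_sv_pair[fn_eval]: "padd (sv_pair g A) (sv_pair g B) = sv_pair g (sv_add A B)"
  by (simp add: sv_pair_add padd_def)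
lemma padd_zero_left[fn_eval]: "padd 0 x = x"
  by (simp add: padd_def)
lemma sv_pair_diff[fn_eval]: "sv_pair g A - sv_pair g B = sv_pair g (sv_add A (sv_scale (-1,0,0) B))"
  by (simp add: sv_pair_add sv_pair_scale dval_def)
lemma sv_pair_neg[fn_eval]: "0 - sv_pair g B = sv_pair g (sv_scale (-1,0,0) B)"
  by (simp add: sv_pair_scale dval_def)

definition sv_pair_d :: "('i \<Rightarrow> dnum) \<Rightarrow> 'i svec \<Rightarrow> dnum" where
  "sv_pair_d g A = foldr (\<lambda>(k,c) acc. dadd (dmul c (g k)) acc) A (0,0,0)"

lemma dval_sv_pair_d: "dval (sv_pair_d g A) = sv_pair (\<lambda>k. dval (g k)) A"
  unfolding sv_pair_d_def
  by (induction A) (auto simp: sv_pair_Cons sv_pair_Nil dval_add dval_mul dval_zero mult.commute)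

definition mu_d :: "idx \<Rightarrow> dnum" where
  "mu_d p = (if snd p = 0 then ((-1)^fst p, 0, 0) else (0,0,0))"

definition sv_lookup :: "'i svec \<Rightarrow> 'i \<Rightarrow> dnum" where
  "sv_lookup V a = foldr (\<lambda>(k,c) acc. if k = a then dadd c acc else acc) V (0,0,0)"

lemma vec_lookup: "vec V a = dval (sv_lookup V a)"
  unfolding sv_lookup_def by (induction V) (auto simp: vec_Cons vec_Nil dval_add dval_zero)

lemma muv_vec_d[fn_eval]: "sv_in Bs A \<Longrightarrow> muv (vec A) = dval (sv_pair_d mu_d A)"
proof -
  have e: "(\<lambda>p. dval (mu_d p)) = (\<lambda>p. if snd p = 0 then (-1)^fst p else 0)"
    by (auto simp: mu_d_def dval_def fun_eq_iff)
  assume "sv_in Bs A" then show ?thesis by (simp add: muv_vec dval_sv_pair_d e)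
qed

lemma sv_pair_vec[fn_eval]: "sv_pair (vec V) A = dval (sv_pair_d (sv_lookup V) A)"
proof -
  have "vec V = (\<lambda>k. dval (sv_lookup V k))" by (rule ext) (rule vec_lookup)
  then show ?thesis by (simp add: dval_sv_pair_d)
qed

lemma sv_pair_hsmul[fn_eval]: "sv_pair (hsmul c u) A = c * sv_pair u A"
  unfolding sv_pair_def hsmul_def by (induction A) (auto simp: algebra_simps)

lemmas [fn_eval] = sv_col_def sv_row_def fun_tens_id_vec id_tens_fun_vec fev_vec
  sv_pair_d_def mu_d_def sv_lookup_def dval_zero

schematic_goal rc_factors:
  "hmul2 (SS2 j (flip2 (pL j))) (fE j) = vec ?X"
  "SinvSinv2 j (flip2 (hmul2 (qL j) (finvE j))) = vec ?Y"
  by (simp add: sv_eval pL_vec fE_vec qL_vec finvE_vec)+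

schematic_goal rc_kernel_basis:
  "rc_kernel (eb (0,0)) = vec ?a00" "rc_kernel (eb (0,1)) = vec ?a01"
  "rc_kernel (eb (0,2)) = vec ?a02" "rc_kernel (eb (0,3)) = vec ?a03"
  "rc_kernel (eb (1,0)) = vec ?a10" "rc_kernel (eb (1,1)) = vec ?a11"
  "rc_kernel (eb (1,2)) = vec ?a12" "rc_kernel (eb (1,3)) = vec ?a13"
  by (simp add: rc_kernel_def rc_factors sv_eval)+

schematic_goal lc_kernel_basis:
  "lc_kernel (eb (0,0)) = vec ?a00" "lc_kernel (eb (0,1)) = vec ?a01"
  "lc_kernel (eb (0,2)) = vec ?a02" "lc_kernel (eb (0,3)) = vec ?a03"
  "lc_kernel (eb (1,0)) = vec ?a10" "lc_kernel (eb (1,1)) = vec ?a11"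
  "lc_kernel (eb (1,2)) = vec ?a12" "lc_kernel (eb (1,3)) = vec ?a13"
  by (simp add: lc_kernel_def VV_vec UU_vec sv_eval)+

lemma rc_rhs_padd:
  "rc_rhs L h r = sv_pair_padd (\<lambda>(p1,p2,p3). muv (eb p3) * (fev L (hmul h (Sinv j (eb p2))) * eb p1 r)) Phi_tab"
  unfolding rc_rhs_def sv_pair_padd_eq[symmetric]
  by (simp only: Phi_vec mult.assoc sum_B3_vec sv_in_Phi_tab)

lemma lc_rhs_padd:
  "lc_rhs l h r = sv_pair_padd (\<lambda>(p1,p2,p3). muv (eb p1) * (fev l (hmul h (Santi j (eb p2))) * eb p3 r)) Phi_tab"
  unfolding lc_rhs_def sv_pair_padd_eq[symmetric]
  by (simp only: Phiinv_eq_Phi Phi_vec mult.assoc sum_B3_vec sv_in_Phi_tab)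

lemmas rc_unfold = rc_defect_def rc_kernel_basis rc_rhs_padd
lemmas lc_unfold = lc_defect_def lc_kernel_basis lc_rhs_padd

definition rcoint :: "'k H1" where
  "rcoint = hadd (hsmul ((1 + j) / 2) (eb (0, 3))) (hsmul ((1 - j) / 2) (eb (1, 3)))"

lemma half_j: "(1 + j) / 2 = dval (1,1,1)" "(1 - j) / 2 = dval (1,-1,1)"
  by (simp_all add: dval_def)

text \<open>The defects are computed for an arbitrary functional L first (leaving pairings sv_pair L D),
  and only then is the candidate substituted for L.\<close>
lemma rcoint_is_right_coint: "is_right_coint j (hsmul c rcoint)"
proof -
  have "is_right_coint j L" if "L = hsmul c rcoint" for L
    unfolding right_coint_iff ball_Bs rc_unfold
    using that
    by (simp (no_asm) add: sv_eval fn_eval Phi_tab_def vec_Cons vec_Nil)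
       (simp add: fn_eval sv_eval rcoint_def half_j)
  then show ?thesis by blast
qed

lemma j_neq: "j \<noteq> 1" "j \<noteq> -1" "- j \<noteq> 1" "j \<noteq> 0"
proof -
  have one_neq: "(1::'k) \<noteq> -1"
  proof
    assume "(1::'k) = -1"
    then have "(1::'k) + 1 = 0" by (metis add.right_inverse)
    then show False using two_nz by (simp only: one_add_one)
  qed
  show "j \<noteq> 1" "j \<noteq> -1" using j_sq one_neq by auto
  then show "- j \<noteq> 1" by (metis minus_minus)
  show "j \<noteq> 0" using j_sq by auto
qed

lemma right_coint_coords:
  assumes "is_right_coint j L"
  shows "L (0,0) = 0" "L (0,1) = 0" "L (0,2) = 0" "L (1,0) = 0" "L (1,1) = 0" "L (1,2) = 0"
    and "L (0,3) = j * L (1,3)"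
proof -
  have D: "rc_defect L p r = 0" if "p \<in> Bs" "r \<in> Bs" for p r
    using assms that right_coint_iff by blast
  show "L (1,0) = 0" using D[of "(0,2)" "(1,2)"] unfolding rc_unfold
    by (simp (no_asm_use) add: sv_eval fn_eval Phi_tab_def vec_Cons vec_Nil)
       (simp add: sv_pair_Cons sv_pair_Nil dval_def)
  show "L (0,0) = 0" using D[of "(1,2)" "(0,2)"] unfolding rc_unfold
    by (simp (no_asm_use) add: sv_eval fn_eval Phi_tab_def vec_Cons vec_Nil)
       (simp add: sv_pair_Cons sv_pair_Nil dval_def)
  show "L (1,1) = 0" using D[of "(0,3)" "(0,2)"] unfolding rc_unfold
    by (simp (no_asm_use) add: sv_eval fn_eval Phi_tab_def vec_Cons vec_Nil)
       (simp add: sv_pair_Cons sv_pair_Nil dval_def j_neq two_nz)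
  show "L (0,1) = 0" using D[of "(1,3)" "(0,2)"] unfolding rc_unfold
    by (simp (no_asm_use) add: sv_eval fn_eval Phi_tab_def vec_Cons vec_Nil)
       (simp add: sv_pair_Cons sv_pair_Nil dval_def j_neq two_nz)
  show "L (0,3) = j * L (1,3)" using D[of "(1,3)" "(0,0)"] unfolding rc_unfold
    by (simp (no_asm_use) add: sv_eval fn_eval Phi_tab_def vec_Cons vec_Nil)
       (simp add: sv_pair_Cons sv_pair_Nil dval_def j_neq two_nz field_simps)
  have plus: "L (0,2) = L (1,2)" using D[of "(0,2)" "(0,0)"] unfolding rc_unfold
    by (simp (no_asm_use) add: sv_eval fn_eval Phi_tab_def vec_Cons vec_Nil)
       (simp add: sv_pair_Cons sv_pair_Nil dval_def j_neq two_nz field_simps)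
  have minus: "- L (0,2) = L (1,2)" using D[of "(1,2)" "(0,0)"] unfolding rc_unfold
    by (simp (no_asm_use) add: sv_eval fn_eval Phi_tab_def vec_Cons vec_Nil)
       (simp add: sv_pair_Cons sv_pair_Nil dval_def j_neq two_nz field_simps)
  from plus minus have "2 * L (0,2) = 0" by simp
  then show "L (0,2) = 0" using two_nz by simp
  with plus show "L (1,2) = 0" by simp
qed

lemma right_coint_multiple:
  assumes L: "L \<in> Hsp" and R: "is_right_coint j L"
  shows "L = hsmul ((1 + j) * L (1,3)) rcoint"
proof (rule ext)
  fix r
  define c where "c = (1 + j) * L (1,3)"
  have c03: "c * ((1 + j) / 2) = L (0,3)"
  proof -
    have "c * ((1 + j) / 2) = ((1+j)*(1+j)) * L (1,3) / 2" by (simp add: c_def)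
    also have "(1+j)*(1+j) = 2*j" using j_sq by algebra
    finally show ?thesis using right_coint_coords(7)[OF R] two_nz by simp
  qed
  have c13: "c * ((1 - j) / 2) = L (1,3)"
  proof -
    have "c * ((1 - j) / 2) = ((1+j)*(1-j)) * L (1,3) / 2" by (simp add: c_def)
    also have "(1+j)*(1-j) = (2::'k)" using j_sq by algebra
    finally show ?thesis using two_nz by simp
  qed
  show "L r = hsmul ((1 + j) * L (1,3)) rcoint r"
  proof (cases "r \<in> Bs")
    case True
    then show ?thesis using right_coint_coords[OF R] c03 c13 unfolding Bs_eq c_def
      by (elim insertE emptyE) (simp_all add: hsmul_def hadd_def rcoint_def eb_def)
  next
    case False
    then have "L r = 0" using L unfolding Hsp_def by blast
    moreover have "r \<noteq> (0,3)" "r \<noteq> (1,3)" using False by auto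
    ultimately show ?thesis by (simp add: hsmul_def hadd_def rcoint_def eb_def)
  qed
qed

lemma right_coint_space: "{L \<in> Hsp. is_right_coint j L} = {hsmul c rcoint | c. True}"
proof (intro equalityI subsetI)
  fix L assume "L \<in> {L \<in> Hsp. is_right_coint j L}"
  then show "L \<in> {hsmul c rcoint |c. True}" using right_coint_multiple by blast
next
  fix L assume "L \<in> {hsmul c rcoint |c. True}"
  then obtain c where c: "L = hsmul c rcoint" by blast
  have "rcoint \<in> Hsp" by (simp add: Hsp_def rcoint_def hadd_def hsmul_def eb_def)
  then show "L \<in> {L \<in> Hsp. is_right_coint j L}"
    using c rcoint_is_right_coint hsmul_Hsp by blast
qed

lemma lcoint_is_left_coint: "is_left_coint j (eb (0,3))"
proof -
  have "is_left_coint j l" if "l = eb (0,3)" for l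
    unfolding left_coint_iff ball_Bs lc_unfold
    using that
    by (simp (no_asm) add: sv_eval fn_eval Phi_tab_def vec_Cons vec_Nil)
       (simp add: fn_eval sv_eval)
  then show ?thesis by blast
qed

lemma left_coint_coords:
  assumes "is_left_coint j l"
  shows "l (0,0) = 0" "l (0,1) = 0" "l (0,2) = 0" "l (1,0) = 0" "l (1,1) = 0" "l (1,2) = 0" "l (1,3) = 0"
proof -
  have D: "lc_defect l p r = 0" if "p \<in> Bs" "r \<in> Bs" for p r
    using assms that left_coint_iff by blast
  show "l (1,3) = 0" using D[of "(0,3)" "(0,0)"] unfolding lc_unfold
    by (simp (no_asm_use) add: sv_eval fn_eval Phi_tab_def vec_Cons vec_Nil)
       (simp add: sv_pair_Cons sv_pair_Nil dval_def)
  show "l (1,0) = 0" using D[of "(0,2)" "(1,2)"] unfolding lc_unfold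
    by (simp (no_asm_use) add: sv_eval fn_eval Phi_tab_def vec_Cons vec_Nil)
       (simp add: sv_pair_Cons sv_pair_Nil dval_def)
  show "l (0,0) = 0" using D[of "(1,2)" "(0,2)"] unfolding lc_unfold
    by (simp (no_asm_use) add: sv_eval fn_eval Phi_tab_def vec_Cons vec_Nil)
       (simp add: sv_pair_Cons sv_pair_Nil dval_def)
  show l01: "l (0,1) = 0" using D[of "(1,1)" "(0,0)"] unfolding lc_unfold
    by (simp (no_asm_use) add: sv_eval fn_eval Phi_tab_def vec_Cons vec_Nil)
       (simp add: sv_pair_Cons sv_pair_Nil dval_def)
  show "l (1,1) = 0" using D[of "(0,3)" "(0,2)"] l01 unfolding lc_unfold
    by (simp (no_asm_use) add: sv_eval fn_eval Phi_tab_def vec_Cons vec_Nil)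
       (simp add: sv_pair_Cons sv_pair_Nil dval_def j_neq two_nz)
  have plus: "l (0,2) = l (1,2)" using D[of "(0,2)" "(0,0)"] unfolding lc_unfold
    by (simp (no_asm_use) add: sv_eval fn_eval Phi_tab_def vec_Cons vec_Nil)
       (simp add: sv_pair_Cons sv_pair_Nil dval_def j_neq two_nz field_simps)
  have minus: "- l (0,2) = l (1,2)" using D[of "(1,2)" "(0,0)"] unfolding lc_unfold
    by (simp (no_asm_use) add: sv_eval fn_eval Phi_tab_def vec_Cons vec_Nil)
       (simp add: sv_pair_Cons sv_pair_Nil dval_def j_neq two_nz field_simps)
  from plus minus have "2 * l (0,2) = 0" by simp
  then show "l (0,2) = 0" using two_nz by simp
  with plus show "l (1,2) = 0" by simp
qed

lemma left_coint_on_basis: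
  assumes "is_left_coint j l" and "a \<in> Bs"
  shows "l a = hsmul (l (0,3)) (eb (0,3)) a"
  using left_coint_coords[OF assms(1)] assms(2) unfolding Bs_eq
  by (elim insertE emptyE) (simp_all add: hsmul_def eb_def)

end

section \<open>Left integrals and the modular element\<close>

context imag_unit
begin

lemma hmul_eb_apply: "p \<in> Bs \<Longrightarrow> hmul (eb p) t r = (\<Sum>b\<in>Bs. t b * bm p b r)"
  by (simp add: hmul_sc eb_unitv sc_mul_def unitv_def sum_unitv
        sum_distrib_left[symmetric] mult.assoc cong: sum.cong)

definition lint :: "'k H1" where
  "lint = hadd (eb (0,3)) (eb (1,3))"

text \<open>Every left integral is a multiple of lint: g t = t gives t(0,3) = t(1,3),
  and x t = 0 kills all other coordinates.\<close>
lemma left_int_multiple: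
  assumes "is_left_int t"
  shows "t = hsmul (t (0,3)) lint"
proof -
  have tH: "t \<in> Hsp" and A: "\<forall>p\<in>Bs. hmul (eb p) t = hsmul (eps (eb p)) t"
    using assms by (auto simp: left_int_iff)
  have G: "hmul (eb (1,0)) t r = hsmul (eps (eb (1,0))) t r" for r using A by simp
  have X: "hmul (eb (0,1)) t r = hsmul (eps (eb (0,1))) t r" for r using A by simp
  have g13: "t (0,3) = t (1,3)" using G[of "(1,3)"]
    by (simp add: hmul_eb_apply) (simp add: Bs_eq bm_def hsmul_def eb_def eps_def)
  have x: "t (0,0) = 0" "t (1,0) = 0" "t (0,1) = 0" "t (1,1) = 0" "t (0,2) = 0" "t (1,2) = 0"
    using X[of "(0,1)"] X[of "(1,1)"] X[of "(0,2)"] X[of "(1,2)"] X[of "(0,3)"] X[of "(1,3)"]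
    by (simp_all add: hmul_eb_apply) (simp_all add: Bs_eq bm_def hsmul_def eb_def eps_def)
  show ?thesis
  proof (rule ext)
    fix r
    show "t r = hsmul (t (0,3)) lint r"
    proof (cases "r \<in> Bs")
      case True
      then show ?thesis using g13 x unfolding Bs_eq
        by (elim insertE emptyE) (simp_all add: hsmul_def lint_def hadd_def eb_def)
    next
      case False
      then have "t r = 0" using tH unfolding Hsp_def by blast
      moreover have "r \<noteq> (0,3)" "r \<noteq> (1,3)" using False by auto
      ultimately show ?thesis by (simp add: hsmul_def hadd_def lint_def eb_def)
    qed
  qed
qed

definition eps_d :: "idx \<Rightarrow> dnum" where
  "eps_d p = (if snd p = 0 then (1, 0, 0) else (0,0,0))"

lemma eps_vec_d: "sv_in Bs A \<Longrightarrow> eps (vec A) = dval (sv_pair_d eps_d A)"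
proof -
  have e: "(\<lambda>p. dval (eps_d p)) = (\<lambda>p. if snd p = 0 then 1 else 0)"
    by (auto simp: eps_d_def dval_def fun_eq_iff)
  assume "sv_in Bs A" then show ?thesis by (simp add: eps_vec dval_sv_pair_d e)
qed

lemma hsmul_zero_vec: "hsmul 0 (vec A) = vec []"
  by (rule ext) (simp add: hsmul_def vec_Nil)

lemma lint_is_left_int: "is_left_int lint"
  unfolding left_int_iff ball_Bs
proof (intro conjI)
  show "lint \<in> Hsp" by (simp add: Hsp_def lint_def hadd_def eb_def)
qed (rule vec_eqI, (simp add: sv_eval fn_eval lint_def eps_vec_d eps_d_def hsmul_zero_vec)+)+

lemma lint_nonzero: "lint \<noteq> (\<lambda>_. 0)"
proof
  assume "lint = (\<lambda>_. 0)"
  moreover have "lint (0,3) = 1" by (simp add: lint_def hadd_def eb_def)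
  ultimately show False by (metis zero_neq_one)
qed

lemma fev_lcoint_lint: "fev (eb (0,3)) (Sinv j lint) = 1"
  unfolding lint_def by (simp add: sv_eval fn_eval) (simp add: dval_def)

lemma modg_cong: "(\<And>a. a \<in> Bs \<Longrightarrow> l a = l' a) \<Longrightarrow> modg j t l = modg j t l'"
  unfolding modg_def by (simp add: fev_cong[of l l'])

lemma modg_scale: "modg j (hsmul c t) (hsmul d l) = hsmul (c*d) (modg j t l)"
  unfolding modg_def Delta_sm hmul2_sc sc_mul_sm1 sc_mul_sm2 fev_scale_functional
  by (rule ext) (simp add: hsmul_def sum_distrib_left split_def mult_ac)

lemma sum_Bs_Bs_vec:
  assumes "sv_in (Bs\<times>Bs) A"
  shows "(\<Sum>(a,b)\<in>Bs\<times>Bs. vec A (a,b) * G a b) = sv_pair (\<lambda>(a,b). G a b) A"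
proof -
  have "(\<Sum>(a,b)\<in>Bs\<times>Bs. vec A (a,b) * G a b) = (\<Sum>x\<in>Bs\<times>Bs. vec A x * (\<lambda>(a,b). G a b) x)"
    by (rule sum.cong) (auto simp: split_def)
  also have "\<dots> = sv_pair (\<lambda>(a,b). G a b) A" using assms by (simp add: sum_vec)
  finally show ?thesis .
qed

definition gmod :: "'k H1" where
  "gmod = hadd (hsmul ((1 + j) / 2) one1) (hsmul ((1 - j) / 2) gel)"
definition gmod_inv :: "'k H1" where
  "gmod_inv = hadd (hsmul ((1 - j) / 2) one1) (hsmul ((1 + j) / 2) gel)"

schematic_goal modg_kernel_lint: "hmul2 (hmul2 (qR j) (Delta j lint)) (pR j) = vec ?X"
  unfolding lint_def by (simp add: sv_eval qR_vec pR_vec)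

lemma modg_lint: "modg j lint (eb (0,3)) = gmod"
  apply (rule vec_eqI)
    apply (rule ext)
    apply (simp only: modg_def modg_kernel_lint mult.assoc)
    apply (subst sum_Bs_Bs_vec, simp)
    apply (simp only: sv_pair_padd_eq)
    apply (simp add: sv_eval fn_eval)
   apply (simp add: gmod_def half_j sv_eval)
  apply (simp add: sv_eval)
  done

lemma gmod_inverse: "hmul gmod gmod_inv = one1" "hmul gmod_inv gmod = one1"
  unfolding gmod_def gmod_inv_def
  by (rule vec_eqI, (simp add: half_j sv_eval)+)+

end

context imag_unit
begin

lemma lint_Hsp: "lint \<in> Hsp"
  by (simp add: Hsp_def lint_def hadd_def eb_def)

text \<open>The modular element of any normalised pair (t, lambda) is omega 1 + omega-bar g: both are
  multiples of (lint, P_{x^3}), and the normalisation fixes the product of the two scalars.\<close>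
lemma modular_element:
  assumes t: "is_left_int t" and l: "is_left_coint j l" and norm: "fev l (Sinv j t) = 1"
  shows "modg j t l = gmod"
proof -
  define c where "c = t (0,3)"
  define d where "d = l (0,3)"
  have t_eq: "t = hsmul c lint" using left_int_multiple[OF t] by (simp add: c_def)
  have l_eq: "l a = hsmul d (eb (0,3)) a" if "a \<in> Bs" for a
    using left_coint_on_basis[OF l that] by (simp add: d_def)
  have "1 = fev l (Sinv j t)" using norm by simp
  also have "\<dots> = fev (hsmul d (eb (0,3))) (Sinv j t)" by (rule fev_cong) (rule l_eq)
  also have "\<dots> = d * (c * fev (eb (0,3)) (Sinv j lint))"
    by (simp add: t_eq fev_scale_functional Sinv_sm lint_Hsp fev_sm)
  also have "\<dots> = c * d" by (simp add: fev_lcoint_lint)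
  finally have cd: "c * d = 1" by simp
  have "modg j t l = modg j t (hsmul d (eb (0,3)))" by (rule modg_cong) (rule l_eq)
  also have "\<dots> = hsmul (c * d) (modg j lint (eb (0,3)))" by (simp add: t_eq modg_scale)
  also have "\<dots> = gmod" by (simp add: cd modg_lint hsmul_def)
  finally show ?thesis .
qed

lemma normalised_pair_exists:
  "\<exists>t l. is_left_int t \<and> t \<noteq> (\<lambda>_. 0) \<and> is_left_coint j l \<and> fev l (Sinv j t) = 1"
  using lint_is_left_int lint_nonzero lcoint_is_left_coint fev_lcoint_lint by blast

end

text \<open>If i is a primitive fourth root of unity then s i (s = +-1) squares to -1, and 2 is
  invertible since otherwise -1 = 1 would give i^2 = 1.\<close>
lemma imag_unit_of_primitive_root:
  fixes i s :: "'k::field"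
  assumes "i ^ 4 = 1" and "i ^ 2 \<noteq> 1" and "s = 1 \<or> s = -1"
  shows "imag_unit (s * i)"
proof
  have ii: "i * i = -1"
  proof -
    have "(i * i - 1) * (i * i + 1) = i ^ 4 - 1" by (simp add: algebra_simps power4_eq_xxxx)
    also have "\<dots> = 0" using assms(1) by simp
    finally have "i * i - 1 = 0 \<or> i * i + 1 = 0" by simp
    moreover have "i * i - 1 \<noteq> 0" using assms(2) by (simp add: power2_eq_square)
    ultimately show ?thesis by (simp add: eq_neg_iff_add_eq_0)
  qed
  have "s * s = 1" using assms(3) by auto
  with ii show "s * i * (s * i) = -1" by (metis mult.commute mult.left_commute mult_1)
  show "(2::'k) \<noteq> 0"
  proof
    assume "(2::'k) = 0"
    then have "(1::'k) = -1" by (metis add.inverse_unique one_add_one)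
    then have "i * i = 1" using ii by simp
    then show False using assms(2) by (simp add: power2_eq_square)
  qed
qed

theorem mainTheorem17:
  fixes i s :: "'k::field"
  assumes "i ^ 4 = 1" and "i ^ 2 \<noteq> 1" and "s = 1 \<or> s = -1"
  shows "{L \<in> Hsp. is_right_coint (s * i) L} =
           {hsmul c (hadd (hsmul ((1 + s * i) / 2) (eb (0, 3))) (hsmul ((1 - s * i) / 2) (eb (1, 3)))) | c. True}
       \<and> (\<exists>t l. is_left_int t \<and> t \<noteq> (\<lambda>_. 0) \<and> is_left_coint (s * i) l \<and> fev l (Sinv (s * i) t) = 1)
       \<and> (\<forall>t l. is_left_int t \<and> t \<noteq> (\<lambda>_. 0) \<and> is_left_coint (s * i) l \<and> fev l (Sinv (s * i) t) = 1
              \<longrightarrow> modg (s * i) t l = hadd (hsmul ((1 + s * i) / 2) one1) (hsmul ((1 - s * i) / 2) gel))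
       \<and> hmul (hadd (hsmul ((1 + s * i) / 2) one1) (hsmul ((1 - s * i) / 2) gel))
              (hadd (hsmul ((1 - s * i) / 2) one1) (hsmul ((1 + s * i) / 2) gel)) = one1
       \<and> hmul (hadd (hsmul ((1 - s * i) / 2) one1) (hsmul ((1 + s * i) / 2) gel))
              (hadd (hsmul ((1 + s * i) / 2) one1) (hsmul ((1 - s * i) / 2) gel)) = one1"
proof -
  interpret imag_unit "s * i"
    using imag_unit_of_primitive_root[OF assms] .
  show ?thesis
    using right_coint_space normalised_pair_exists modular_element gmod_inverse
    unfolding rcoint_def gmod_def gmod_inv_def by blast
qed

end
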